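(* There exists $\Delta_0$ such that the following holds for every simple graph $G=(V,E)$ of maximum degree $\Delta\ge\Delta_0$. Put $$p=\left\lceil \Delta^{1/6}/\ln^{1/6}\Delta\right\rceil,\qquad q=\left\lceil \Delta^{1/3}/\ln^{1/3}\Delta\right\rceil,\qquad B=\left\lceil\Delta^{2/3}\ln^{1/3}\Delta\right\rceil+6\left\lceil\Delta^{1/3}\ln^{2/3}\Delta\right\rceil,$$ and for every positive integer $\alpha$ let $$I_\alpha=\left((\alpha-1)\tfrac{\Delta^{5/3}\ln^{1/3}\Delta}{3},\ \alpha\tfrac{\Delta^{5/3}\ln^{1/3}\Delta}{3}\right].$$ Let $R(d,\Delta)$ be any given real function of $d\in\{0,\dots,\Delta\}$ and $\Delta$, and for a colouring $c_1:V\to\{1,\dots,p\}$ and a vertex $v$ of degree $d$ set $S(v)=B\,d\,c_1(v)+R(d,\Delta)$; assume $R$ is such that $S(v)\le \Delta^2$ for every vertex $v$ and every such $c_1$. Then there exist colourings $$c_1:V\to\{1,\dots,p\},\qquad c_2:E\to\{1,\dots,q\},\qquad c_3:V\cup E\to\{1,\dots,2p+q\}$$ such that for every vertex $v$, of degree $d$: (I) if $d\ge \Delta/3$, then for every $c_1^*\in\{1,\dots,p\}$ the number of neighbours $u$ of $v$ with $c_1(u)=c_1^*$ equals $d/p+f_{1,c_1^*}(v)$ with $|f_{1,c_1^*}(v)|\le\Delta^{1/2}$; (II) if $d\ge\Delta/3$, then for every $c_2^*\in\{1,\dots,q\}$ the number of neighbours $u$ of $v$ with $c_2(uv)=c_2^*$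 equals $d/q+f_{2,c_2^*}(v)$ with $|f_{2,c_2^*}(v)|\le 3\Delta^{1/3}\ln^{2/3}\Delta$; (III) $c_3(uv)=c_1(u)+c_1(v)+c_2(uv)$ holds for at least $d-(3+\varepsilon(\Delta))\Delta^{2/3}\ln^{1/3}\Delta$ neighbours $u$ of $v$, where $\varepsilon(\Delta)$ depends only on $\Delta$ and $\varepsilon(\Delta)\to0$ as $\Delta\to\infty$; (IV) for every $c_3^*\in\{1,\dots,2p+q\}$, the number of edges $uv$ incident with $v$ with $c_3(uv)=c_3^*$ is at most $\Delta^{2/3}\ln^{1/3}\Delta+5\Delta^{1/3}\ln^{2/3}\Delta$; (V) for every neighbour $u$ of $v$, if $c_3(u)=c_3(v)$ then $c_3(uv)=c_3(v)$; (VI) if $d\ge\Delta/3$, then for every integer $\alpha>0$ the number of neighbours $u$ of $v$ with $d(u)\ge\Delta/3$ and $S(u)\in I_\alpha$ is at most $\Delta^{5/6}\ln^{1/6}\Delta+\Delta^{1/2}$.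
   Context: $G$ is a simple graph, $N(v)$ denotes the set of neighbours of $v$ and $d(v)$ its degree. The colourings $c_1,c_2,c_3$ are arbitrary (not necessarily proper) maps into the indicated integer sets; $c_3$ assigns colours to both vertices and edges. *)

theory Defs
  imports Complex_Main
begin

definition simple_graph :: "'a set \<Rightarrow> ('a \<Rightarrow> 'a \<Rightarrow> bool) \<Rightarrow> bool" where
  "simple_graph V E \<longleftrightarrow> finite V \<and>
     (\<forall>u v. E u v \<longrightarrow> u \<in> V \<and> v \<in> V \<and> u \<noteq> v \<and> E v u)"

definition nbrs :: "'a set \<Rightarrow> ('a \<Rightarrow> 'a \<Rightarrow> bool) \<Rightarrow> 'a \<Rightarrow> 'a set" where
  "nbrs V E v = {u \<in> V. E v u}"

definition deg :: "'a set \<Rightarrow> ('a \<Rightarrow> 'a \<Rightarrow> bool) \<Rightarrow> 'a \<Rightarrow> nat" where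
  "deg V E v = card (nbrs V E v)"

definition max_degree :: "'a set \<Rightarrow> ('a \<Rightarrow> 'a \<Rightarrow> bool) \<Rightarrow> nat \<Rightarrow> bool" where
  "max_degree V E D \<longleftrightarrow> V \<noteq> {} \<and> D = Max (deg V E ` V)"

definition par_p :: "nat \<Rightarrow> nat" where
  "par_p D = nat \<lceil>real D powr (1/6) / ln (real D) powr (1/6)\<rceil>"

definition par_q :: "nat \<Rightarrow> nat" where
  "par_q D = nat \<lceil>real D powr (1/3) / ln (real D) powr (1/3)\<rceil>"

definition par_B :: "nat \<Rightarrow> nat" where
  "par_B D = nat \<lceil>real D powr (2/3) * ln (real D) powr (1/3)\<rceil>
            + 6 * nat \<lceil>real D powr (1/3) * ln (real D) powr (2/3)\<rceil>"

definition I_int :: "nat \<Rightarrow> nat \<Rightarrow> real set" where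
  "I_int D \<alpha> = {(real \<alpha> - 1) * (real D powr (5/3) * ln (real D) powr (1/3) / 3) <..
                 real \<alpha> * (real D powr (5/3) * ln (real D) powr (1/3) / 3)}"

end

theory Submission
  imports Defs "HOL-Library.FuncSet" "HOL-Real_Asymp.Real_Asymp"
begin

text \<open>Label every vertex independently and uniformly by \<open>(c\<^sub>1, c\<^sub>3) \<in> [p] \<times> {3..2p+q}\<close>
  and every edge by \<open>(c\<^sub>2, w) \<in> [q] \<times> {1, 2}\<close>, and colour the edges by the rule
  \<open>edge_colour\<close> below, which makes (V) hold outright. Each of (I)--(IV) and (VI) at a
  vertex \<open>v\<close> bounds the number of neighbours \<open>u\<close> for which some event about the labels of
  \<open>u\<close> and \<open>uv\<close> (and of \<open>v\<close>) happens; for distinct \<open>u\<close> these events involve disjoint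
  labels, so Chernoff bounds and a union bound show that \<open>v\<close> fails with probability
  \<open>o(\<Delta>^(-2))\<close>. Whether \<open>v\<close> fails depends only on the labels within distance one of \<open>v\<close>,
  hence is independent of the failures of all vertices at distance more than two, and the
  symmetric local lemma with dependency degree \<open>\<Delta> + \<Delta>\<^sup>2\<close> yields a labelling at which no
  vertex fails.\<close>

lemma ln_one_plus_ge:
  fixes d :: real
  assumes "0 \<le> d"
  shows "d - d\<^sup>2 / 2 \<le> ln (1 + d)"
proof -
  let ?h = "\<lambda>x::real. ln (1 + x) - x + x\<^sup>2 / 2"
  have "?h 0 \<le> ?h d"
  proof (rule DERIV_nonneg_imp_increasing_open[OF assms])
    fix x :: real
    assume x: "0 < x" "x < d"
    have "DERIV ?h x :> 1 / (1 + x) - 1 + x"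
      using x by (auto intro!: derivative_eq_intros)
    moreover have "1 / (1 + x) - 1 + x \<ge> 0"
      using x by (simp add: field_simps power2_eq_square)
    ultimately show "\<exists>y. DERIV ?h x :> y \<and> y \<ge> 0" by blast
  qed (auto intro!: continuous_intros)
  then show ?thesis by simp
qed

lemma ln_ge_half_diff_inverse:
  fixes y :: real
  assumes "0 < y" "y \<le> 1"
  shows "(y - 1 / y) / 2 \<le> ln y"
proof -
  let ?h = "\<lambda>x::real. ln x - (x - 1 / x) / 2"
  have "?h 1 \<le> ?h y"
  proof (rule DERIV_nonpos_imp_decreasing_open[OF assms(2)])
    fix x :: real
    assume x: "y < x" "x < 1"
    have "DERIV ?h x :> 1 / x - (1 + 1 / x\<^sup>2) / 2"
      using x assms by (auto intro!: derivative_eq_intros simp: power2_eq_square field_simps)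
    moreover have "1 / x - (1 + 1 / x\<^sup>2) / 2 = - ((x - 1)\<^sup>2 / (2 * x\<^sup>2))"
      using x assms by (simp add: field_simps power2_eq_square)
    ultimately show "\<exists>z. DERIV ?h x :> z \<and> z \<le> 0" by force
  qed (use assms in \<open>auto intro!: continuous_intros\<close>)
  then show ?thesis by simp
qed

lemma chernoff_upper_exponent:
  fixes M t :: real
  assumes "0 \<le> M" "0 < t"
  shows "t / (M + t) * M - (M + t) * ln (1 + t / (M + t)) \<le> - t\<^sup>2 / (2 * (M + t))"
proof -
  define \<delta> where "\<delta> = t / (M + t)"
  have mt: "0 < M + t" and \<delta>: "0 \<le> \<delta>" and t_eq: "(M + t) * \<delta> = t"
    using assms by (auto simp: \<delta>_def)
  have "\<delta> * M - (M + t) * ln (1 + \<delta>) \<le> \<delta> * M - (M + t) * (\<delta> - \<delta>\<^sup>2 / 2)"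
    using ln_one_plus_ge[OF \<delta>] mt by (intro diff_left_mono mult_left_mono) auto
  also have "\<dots> = \<delta> * M - (M + t) * \<delta> + ((M + t) * \<delta>) * \<delta> / 2"
    by (simp add: algebra_simps power2_eq_square)
  also have "\<dots> = \<delta> * M - (M + t) * \<delta> + t * \<delta> / 2"
    by (simp only: t_eq)
  also have "\<dots> = - t * \<delta> / 2"
    by (simp add: algebra_simps)
  also have "\<dots> = - t\<^sup>2 / (2 * (M + t))"
    by (simp add: \<delta>_def power2_eq_square)
  finally show ?thesis by (simp add: \<delta>_def)
qed

lemma chernoff_lower_exponent:
  fixes m t :: real
  assumes "0 < t" "t < m"
  shows "- (t / m) * m - (m - t) * ln (1 - t / m) \<le> - t\<^sup>2 / (2 * m)"
proof -
  define z where "z = 1 - t / m"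
  have z: "0 < z" "z \<le> 1" using assms by (auto simp: z_def)
  have "- (t / m) * m - (m - t) * ln z \<le> - (t / m) * m - (m - t) * ((z - 1 / z) / 2)"
    using ln_ge_half_diff_inverse[OF z] assms by (intro diff_left_mono mult_left_mono) auto
  also have "\<dots> = - t\<^sup>2 / (2 * m)"
    using assms by (simp add: z_def field_simps power2_eq_square)
  finally show ?thesis by (simp add: z_def)
qed

lemma card_ge_mult_le_sum:
  fixes h :: "'b \<Rightarrow> real"
  assumes "finite A" "\<And>f. f \<in> A \<Longrightarrow> 0 \<le> h f"
  shows "real (card {f\<in>A. c \<le> h f}) * c \<le> (\<Sum>f\<in>A. h f)"
proof -
  have "real (card {f\<in>A. c \<le> h f}) * c = (\<Sum>f\<in>{f\<in>A. c \<le> h f}. c)" by simp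
  also have "\<dots> \<le> (\<Sum>f\<in>{f\<in>A. c \<le> h f}. h f)" by (rule sum_mono) simp
  also have "\<dots> \<le> (\<Sum>f\<in>A. h f)" using assms by (intro sum_mono2) auto
  finally show ?thesis .
qed

lemma card_le_card_mult_of_cover:
  fixes B :: "'k \<Rightarrow> 'b set"
  assumes "finite K" "\<And>k. k \<in> K \<Longrightarrow> finite (B k)" "\<And>k. k \<in> K \<Longrightarrow> real (card (B k)) \<le> b"
    and "S \<subseteq> (\<Union>k\<in>K. B k)"
  shows "real (card S) \<le> real (card K) * b"
proof -
  have "card S \<le> card (\<Union>k\<in>K. B k)" using assms by (intro card_mono) auto
  also have "\<dots> \<le> (\<Sum>k\<in>K. card (B k))" by (rule card_UN_le[OF assms(1)])
  finally have "real (card S) \<le> (\<Sum>k\<in>K. real (card (B k)))" by (simp flip: of_nat_sum)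
  also have "\<dots> \<le> (\<Sum>k\<in>K. b)" using assms(3) by (intro sum_mono) auto
  finally show ?thesis by simp
qed

lemma card_image_times_le: "finite A \<Longrightarrow> finite B \<Longrightarrow> card (f ` (A \<times> B)) \<le> card A * card B"
  by (metis card_cartesian_product card_image_le finite_cartesian_product)

section \<open>Uniform product spaces\<close>

definition depends_on :: "'x set \<Rightarrow> (('x \<Rightarrow> 'v) \<Rightarrow> 'r) \<Rightarrow> bool" where
  "depends_on T h \<longleftrightarrow> (\<forall>f g. (\<forall>x\<in>T. f x = g x) \<longrightarrow> h f = h g)"

lemma depends_onI: "(\<And>f g. (\<And>x. x \<in> T \<Longrightarrow> f x = g x) \<Longrightarrow> h f = h g) \<Longrightarrow> depends_on T h"
  unfolding depends_on_def by blast

lemma depends_onD: "depends_on T h \<Longrightarrow> (\<And>x. x \<in> T \<Longrightarrow> f x = g x) \<Longrightarrow> h f = h g"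
  unfolding depends_on_def by blast

lemma depends_on_mono: "depends_on T h \<Longrightarrow> T \<subseteq> U \<Longrightarrow> depends_on U h"
  unfolding depends_on_def by blast

lemma depends_on_const [simp]: "depends_on T (\<lambda>f. c)"
  by (simp add: depends_on_def)

lemma depends_on_comp: "depends_on T h \<Longrightarrow> depends_on T (\<lambda>f. g (h f))"
  unfolding depends_on_def by metis

lemma depends_on_Ball:
  "(\<And>w. w \<in> S \<Longrightarrow> depends_on (T w) (P w)) \<Longrightarrow> depends_on (\<Union>w\<in>S. T w) (\<lambda>f. \<forall>w\<in>S. P w f)"
  unfolding depends_on_def by (metis (no_types, lifting) UN_I)

lemma bij_betw_PiE_merge:
  assumes "T \<subseteq> X"
  shows "bij_betw (\<lambda>(a, b) x. if x \<in> T then a x else b x) (PiE T C \<times> PiE (X - T) C) (PiE X C)"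
proof (rule bij_betwI[where g = "\<lambda>f. (restrict f T, restrict f (X - T))"])
  show "(\<lambda>(a, b) x. if x \<in> T then a x else b x) \<in> PiE T C \<times> PiE (X - T) C \<rightarrow> PiE X C"
    using assms by (auto simp: PiE_iff extensional_def)
  show "(\<lambda>f. (restrict f T, restrict f (X - T))) \<in> PiE X C \<rightarrow> PiE T C \<times> PiE (X - T) C"
    using assms by fastforce
qed (use assms in \<open>auto simp: PiE_iff extensional_def fun_eq_iff\<close>)

lemma sum_PiE_mult_split:
  fixes g h :: "('x \<Rightarrow> 'v) \<Rightarrow> real"
  assumes "T \<subseteq> X" "depends_on T g" "depends_on (X - T) h"
  shows "(\<Sum>f\<in>PiE X C. g f * h f) = (\<Sum>a\<in>PiE T C. g a) * (\<Sum>b\<in>PiE (X - T) C. h b)"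
proof -
  let ?merge = "\<lambda>(a, b) x. if x \<in> T then a x else b x"
  have "(\<Sum>f\<in>PiE X C. g f * h f) = (\<Sum>p\<in>PiE T C \<times> PiE (X - T) C. g (?merge p) * h (?merge p))"
    using sum.reindex_bij_betw[OF bij_betw_PiE_merge[OF assms(1)], of "\<lambda>f. g f * h f"] by simp
  also have "\<dots> = (\<Sum>p\<in>PiE T C \<times> PiE (X - T) C. g (fst p) * h (snd p))"
  proof (rule sum.cong[OF refl])
    fix p assume "p \<in> PiE T C \<times> PiE (X - T) C"
    have "g (?merge p) = g (fst p)" by (rule depends_onD[OF assms(2)]) (auto split: prod.splits)
    moreover have "h (?merge p) = h (snd p)"
      by (rule depends_onD[OF assms(3)]) (auto split: prod.splits)
    ultimately show "g (?merge p) * h (?merge p) = g (fst p) * h (snd p)" by simp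
  qed
  also have "\<dots> = (\<Sum>a\<in>PiE T C. g a) * (\<Sum>b\<in>PiE (X - T) C. h b)"
    by (simp add: sum_product sum.cartesian_product case_prod_beta)
  finally show ?thesis .
qed

lemma sum_PiE_mult_independent:
  fixes g h :: "('x \<Rightarrow> 'v) \<Rightarrow> real"
  assumes "T \<subseteq> X" "U \<subseteq> X" "T \<inter> U = {}" "depends_on T g" "depends_on U h"
  shows "real (card (PiE X C)) * (\<Sum>f\<in>PiE X C. g f * h f)
         = (\<Sum>f\<in>PiE X C. g f) * (\<Sum>f\<in>PiE X C. h f)"
proof -
  have h: "depends_on (X - T) h" using assms by (auto intro: depends_on_mono)
  have 1: "real (card (PiE X C)) = (\<Sum>a\<in>PiE T C. 1) * (\<Sum>b\<in>PiE (X - T) C. (1::real))"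
    using sum_PiE_mult_split[OF assms(1) depends_on_const depends_on_const, of 1 1 C] by simp
  show ?thesis
    using sum_PiE_mult_split[OF assms(1,4) h, of C]
      sum_PiE_mult_split[OF assms(1,4) depends_on_const, of 1 C]
      sum_PiE_mult_split[OF assms(1) depends_on_const h, of 1 C]
    unfolding 1 by (simp add: algebra_simps)
qed

lemma card_PiE_conj_independent:
  assumes "T \<subseteq> X" "U \<subseteq> X" "T \<inter> U = {}" "depends_on T P" "depends_on U Q" "finite (PiE X C)"
  shows "real (card (PiE X C)) * real (card {f\<in>PiE X C. P f \<and> Q f})
         = real (card {f\<in>PiE X C. P f}) * real (card {f\<in>PiE X C. Q f})"
proof -
  have dep: "depends_on T (\<lambda>f. if P f then 1 else 0 :: real)"
    "depends_on U (\<lambda>f. if Q f then 1 else 0 :: real)"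
    using assms(4,5) unfolding depends_on_def by metis+
  have eq: "(\<lambda>f. (if P f then 1 else 0) * (if Q f then 1 else 0 :: real))
            = (\<lambda>f. if P f \<and> Q f then 1 else 0)"
    by auto
  show ?thesis
    using sum_PiE_mult_independent[OF assms(1-3) dep, of C, unfolded eq] assms(6)
    by (simp add: sum.inter_filter[symmetric])
qed

lemma bij_betw_PiE_pair:
  assumes "x \<noteq> y"
  shows "bij_betw (\<lambda>f. (f x, f y)) (PiE {x, y} C) (C x \<times> C y)"
proof (rule bij_betwI[where g = "\<lambda>(a, b) z. if z = x then a else if z = y then b else undefined"])
  show "(\<lambda>(a, b) z. if z = x then a else if z = y then b else undefined) \<in> C x \<times> C y \<rightarrow> PiE {x, y} C"
    using assms by (auto simp: PiE_iff extensional_def split: if_splits)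
  show "(case (f x, f y) of (a, b) \<Rightarrow> \<lambda>z. if z = x then a else if z = y then b else undefined) = f"
    if "f \<in> PiE {x, y} C" for f
    using that by (auto simp: PiE_iff extensional_def fun_eq_iff)
qed (use assms in auto)

definition pair_prob :: "'v set \<Rightarrow> 'w set \<Rightarrow> ('v \<Rightarrow> 'w \<Rightarrow> bool) \<Rightarrow> real" where
  "pair_prob A B Q = real (card {p\<in>A \<times> B. Q (fst p) (snd p)}) / (real (card A) * real (card B))"

lemma pair_prob_nonneg: "0 \<le> pair_prob A B Q"
  by (simp add: pair_prob_def)

lemma pair_prob_le_one:
  assumes "finite A" "finite B"
  shows "pair_prob A B Q \<le> 1"
proof -
  have "card {p\<in>A \<times> B. Q (fst p) (snd p)} \<le> card A * card B"
    using assms card_mono[of "A \<times> B"] by (simp add: card_cartesian_product)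
  then show ?thesis
    unfolding pair_prob_def
    by (cases "card A * card B = 0") (simp_all add: divide_le_eq_1 flip: of_nat_mult)
qed

lemma pair_prob_le:
  assumes "card {p\<in>A \<times> B. Q (fst p) (snd p)} \<le> n"
  shows "pair_prob A B Q \<le> real n / (real (card A) * real (card B))"
  unfolding pair_prob_def using assms by (intro divide_right_mono) auto

lemma sum_PiE_pair_weight:
  fixes z :: real
  assumes X: "finite X" "\<And>x. x \<in> X \<Longrightarrow> finite (C x)" "\<And>x. x \<in> X \<Longrightarrow> C x \<noteq> {}"
    and xy: "x \<in> X" "y \<in> X" "x \<noteq> y"
  shows "(\<Sum>f\<in>PiE X C. if Q (f x) (f y) then z else 1)
         = real (card (PiE X C)) * (1 + pair_prob (C x) (C y) Q * (z - 1))"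
proof -
  let ?w = "\<lambda>a b. if Q a b then z else 1"
  have T: "{x, y} \<subseteq> X" using xy by auto
  have cxy: "real (card (C x)) \<noteq> 0" "real (card (C y)) \<noteq> 0"
    using X xy by (simp_all add: card_gt_0_iff)
  have finxy: "finite (C x \<times> C y)" using X xy by auto
  have "(\<Sum>f\<in>PiE X C. ?w (f x) (f y))
        = (\<Sum>a\<in>PiE {x, y} C. ?w (a x) (a y)) * (\<Sum>b\<in>PiE (X - {x, y}) C. 1)"
    using sum_PiE_mult_split[OF T _ depends_on_const, of "\<lambda>f. ?w (f x) (f y)" 1 C]
    by (simp add: depends_on_def)
  also have "(\<Sum>a\<in>PiE {x, y} C. ?w (a x) (a y)) = (\<Sum>p\<in>C x \<times> C y. ?w (fst p) (snd p))"
    using sum.reindex_bij_betw[OF bij_betw_PiE_pair[OF xy(3)], of "\<lambda>p. ?w (fst p) (snd p)"] by simp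
  also have "\<dots> = (\<Sum>p\<in>C x \<times> C y. 1 + (if Q (fst p) (snd p) then z - 1 else 0))"
    by (intro sum.cong) auto
  also have "\<dots> = real (card (C x \<times> C y)) + real (card {p\<in>C x \<times> C y. Q (fst p) (snd p)}) * (z - 1)"
    using finxy by (simp add: sum.distrib flip: sum.inter_filter)
  also have "\<dots> = real (card (C x)) * real (card (C y)) * (1 + pair_prob (C x) (C y) Q * (z - 1))"
    using cxy by (simp add: card_cartesian_product pair_prob_def field_simps)
  also have "real (card (C x)) * real (card (C y)) = (\<Sum>a\<in>PiE {x, y} C. 1)"
    using xy(3) by (simp add: card_PiE)
  finally show ?thesis
    using sum_PiE_mult_split[OF T depends_on_const depends_on_const, of 1 1 C]
    by (simp add: ac_simps)
qed

text \<open>Probabilities are proportions of \<open>PiE X C\<close>. The event indexed by \<open>u \<in> N\<close> looks only at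
  the coordinates \<open>xs u\<close> and \<open>ys u\<close>; these are all distinct, so the events are independent
  and Chernoff bounds apply.\<close>

locale pair_sampling =
  fixes X :: "'x set" and C :: "'x \<Rightarrow> 'v set" and N :: "'u set" and xs ys :: "'u \<Rightarrow> 'x"
  assumes finite_X: "finite X"
    and finite_C: "\<And>x. x \<in> X \<Longrightarrow> finite (C x)"
    and C_nonempty: "\<And>x. x \<in> X \<Longrightarrow> C x \<noteq> {}"
    and finite_N: "finite N"
    and coords_in: "\<And>u. u \<in> N \<Longrightarrow> xs u \<in> X \<and> ys u \<in> X \<and> xs u \<noteq> ys u"
    and coords_distinct:
      "\<And>u w. u \<in> N \<Longrightarrow> w \<in> N \<Longrightarrow> u \<noteq> w \<Longrightarrow> xs u \<noteq> xs w \<and> ys u \<noteq> ys w \<and> xs u \<noteq> ys w"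
begin

lemma finite_PiE_XC: "finite (PiE X C)"
  using finite_X finite_C by (rule finite_PiE)

lemma sum_prod_weights:
  fixes z :: real
  assumes "N' \<subseteq> N"
  shows "(\<Sum>f\<in>PiE X C. \<Prod>u\<in>N'. if Q u (f (xs u)) (f (ys u)) then z else 1)
         = real (card (PiE X C)) * (\<Prod>u\<in>N'. 1 + pair_prob (C (xs u)) (C (ys u)) (Q u) * (z - 1))"
  using finite_subset[OF assms finite_N] assms
proof (induction N' rule: finite_induct)
  case (insert u N')
  let ?g = "\<lambda>f. if Q u (f (xs u)) (f (ys u)) then z else 1"
  let ?h = "\<lambda>f. \<Prod>w\<in>N'. if Q w (f (xs w)) (f (ys w)) then z else 1"
  have u: "xs u \<in> X" "ys u \<in> X" "xs u \<noteq> ys u" using coords_in insert.prems by auto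
  have disj: "{xs u, ys u} \<inter> (\<Union>w\<in>N'. {xs w, ys w}) = {}"
    using coords_distinct insert by fastforce
  have indep: "real (card (PiE X C)) * (\<Sum>f\<in>PiE X C. ?g f * ?h f)
               = (\<Sum>f\<in>PiE X C. ?g f) * (\<Sum>f\<in>PiE X C. ?h f)"
    using u insert.prems coords_in disj
    by (intro sum_PiE_mult_independent[of "{xs u, ys u}" _ "\<Union>w\<in>N'. {xs w, ys w}"])
      (auto simp: depends_on_def intro!: prod.cong)
  have "0 < card (PiE X C)"
    using finite_X finite_C C_nonempty by (simp add: card_PiE prod_pos card_gt_0_iff)
  then have "(\<Sum>f\<in>PiE X C. ?g f * ?h f)
             = (\<Sum>f\<in>PiE X C. ?g f) * (\<Sum>f\<in>PiE X C. ?h f) / real (card (PiE X C))"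
    using indep by (simp add: field_simps)
  also have "\<dots> = real (card (PiE X C)) * ((1 + pair_prob (C (xs u)) (C (ys u)) (Q u) * (z - 1))
                     * (\<Prod>w\<in>N'. 1 + pair_prob (C (xs w)) (C (ys w)) (Q w) * (z - 1)))"
    using insert sum_PiE_pair_weight[OF finite_X finite_C C_nonempty u, where Q = "Q u" and z = z]
    by simp
  finally show ?case using insert by simp
qed simp

lemma sum_pow_count:
  fixes z :: real
  shows "(\<Sum>f\<in>PiE X C. z ^ card {u\<in>N. Q u (f (xs u)) (f (ys u))})
         = real (card (PiE X C)) * (\<Prod>u\<in>N. 1 + pair_prob (C (xs u)) (C (ys u)) (Q u) * (z - 1))"
  using sum_prod_weights[OF order_refl, of Q z] finite_N by (simp add: prod.inter_filter[symmetric])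

lemma upper_tail:
  assumes mean: "(\<Sum>u\<in>N. pair_prob (C (xs u)) (C (ys u)) (Q u)) \<le> M" and "0 \<le> M" "0 < t"
  shows "real (card {f\<in>PiE X C. M + t \<le> real (card {u\<in>N. Q u (f (xs u)) (f (ys u))})})
         \<le> exp (- t\<^sup>2 / (2 * (M + t))) * real (card (PiE X C))"
proof -
  let ?cnt = "\<lambda>f. card {u\<in>N. Q u (f (xs u)) (f (ys u))}"
  let ?\<Omega> = "real (card (PiE X C))"
  define \<delta> where "\<delta> = t / (M + t)"
  define z where "z = 1 + \<delta>"
  have \<delta>: "0 \<le> \<delta>" and z: "1 \<le> z" using assms by (auto simp: \<delta>_def z_def)
  have "{f\<in>PiE X C. M + t \<le> real (?cnt f)} \<subseteq> {f\<in>PiE X C. z powr (M + t) \<le> z ^ ?cnt f}"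
    using z by (auto simp: powr_realpow[symmetric] intro: powr_mono)
  then have "real (card {f\<in>PiE X C. M + t \<le> real (?cnt f)}) * z powr (M + t)
             \<le> real (card {f\<in>PiE X C. z powr (M + t) \<le> z ^ ?cnt f}) * z powr (M + t)"
    using finite_PiE_XC by (intro mult_right_mono card_mono of_nat_mono) auto
  also have "\<dots> \<le> ?\<Omega> * (\<Prod>u\<in>N. 1 + pair_prob (C (xs u)) (C (ys u)) (Q u) * (z - 1))"
    using card_ge_mult_le_sum[OF finite_PiE_XC, of "\<lambda>f. z ^ ?cnt f"] z sum_pow_count by simp
  also have "\<dots> \<le> ?\<Omega> * (\<Prod>u\<in>N. exp (\<delta> * pair_prob (C (xs u)) (C (ys u)) (Q u)))"
    using \<delta> by (intro mult_left_mono prod_mono)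
      (auto simp: z_def pair_prob_nonneg mult.commute[of \<delta>] add_nonneg_nonneg)
  also have "\<dots> \<le> ?\<Omega> * exp (\<delta> * M)"
    using mean \<delta>
    by (simp add: exp_sum[OF finite_N, symmetric] sum_distrib_left[symmetric] mult_left_mono)
  finally have "real (card {f\<in>PiE X C. M + t \<le> real (?cnt f)}) \<le> ?\<Omega> * exp (\<delta> * M - (M + t) * ln z)"
    using z by (simp add: powr_def exp_diff pos_le_divide_eq)
  also have "\<dots> \<le> ?\<Omega> * exp (- t\<^sup>2 / (2 * (M + t)))"
    using chernoff_upper_exponent[OF assms(2,3)] by (intro mult_left_mono) (auto simp: \<delta>_def z_def)
  finally show ?thesis by (simp add: mult.commute)
qed

lemma lower_tail:
  assumes mean: "(\<Sum>u\<in>N. pair_prob (C (xs u)) (C (ys u)) (Q u)) = m" and "0 < t" "t < m"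
  shows "real (card {f\<in>PiE X C. real (card {u\<in>N. Q u (f (xs u)) (f (ys u))}) \<le> m - t})
         \<le> exp (- t\<^sup>2 / (2 * m)) * real (card (PiE X C))"
proof -
  let ?cnt = "\<lambda>f. card {u\<in>N. Q u (f (xs u)) (f (ys u))}"
  let ?\<Omega> = "real (card (PiE X C))"
  define \<delta> where "\<delta> = t / m"
  define z where "z = 1 - \<delta>"
  have \<delta>: "0 < \<delta>" "\<delta> < 1" and z: "0 < z" "z \<le> 1" using assms by (auto simp: \<delta>_def z_def)
  have "{f\<in>PiE X C. real (?cnt f) \<le> m - t} \<subseteq> {f\<in>PiE X C. z powr (m - t) \<le> z ^ ?cnt f}"
    using z by (auto simp: powr_realpow[symmetric] intro: powr_mono')
  then have "real (card {f\<in>PiE X C. real (?cnt f) \<le> m - t}) * z powr (m - t)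
             \<le> real (card {f\<in>PiE X C. z powr (m - t) \<le> z ^ ?cnt f}) * z powr (m - t)"
    using finite_PiE_XC by (intro mult_right_mono card_mono of_nat_mono) auto
  also have "\<dots> \<le> ?\<Omega> * (\<Prod>u\<in>N. 1 + pair_prob (C (xs u)) (C (ys u)) (Q u) * (z - 1))"
    using card_ge_mult_le_sum[OF finite_PiE_XC, of "\<lambda>f. z ^ ?cnt f"] z sum_pow_count by simp
  also have "\<dots> \<le> ?\<Omega> * (\<Prod>u\<in>N. exp (- \<delta> * pair_prob (C (xs u)) (C (ys u)) (Q u)))"
  proof (intro mult_left_mono prod_mono conjI)
    fix u assume "u \<in> N"
    then have "pair_prob (C (xs u)) (C (ys u)) (Q u) \<le> 1"
      using coords_in finite_C by (intro pair_prob_le_one) auto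
    then have "pair_prob (C (xs u)) (C (ys u)) (Q u) * \<delta> \<le> 1"
      using \<delta> pair_prob_nonneg by (intro mult_le_one) auto
    then show "0 \<le> 1 + pair_prob (C (xs u)) (C (ys u)) (Q u) * (z - 1)" by (simp add: z_def)
    show "1 + pair_prob (C (xs u)) (C (ys u)) (Q u) * (z - 1)
          \<le> exp (- \<delta> * pair_prob (C (xs u)) (C (ys u)) (Q u))"
      using exp_ge_add_one_self[of "- \<delta> * pair_prob (C (xs u)) (C (ys u)) (Q u)"]
      by (simp add: z_def mult.commute)
  qed simp
  also have "\<dots> = ?\<Omega> * exp (- \<delta> * m)"
    using mean by (simp add: exp_sum[OF finite_N, symmetric] sum_negf sum_distrib_left[symmetric])
  finally have "real (card {f\<in>PiE X C. real (?cnt f) \<le> m - t})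
                \<le> ?\<Omega> * exp (- \<delta> * m - (m - t) * ln z)"
    using z by (simp add: powr_def exp_diff pos_le_divide_eq)
  also have "\<dots> \<le> ?\<Omega> * exp (- t\<^sup>2 / (2 * m))"
    using chernoff_lower_exponent[OF assms(2,3)] by (intro mult_left_mono) (auto simp: \<delta>_def z_def)
  finally show ?thesis by (simp add: mult.commute)
qed

end

section \<open>The local lemma, counting version\<close>

locale counting_lll =
  fixes \<Omega> :: "'b set" and I :: "'i set" and A :: "'i \<Rightarrow> 'b \<Rightarrow> bool" and \<Gamma> :: "'i \<Rightarrow> 'i set"
    and d :: nat and P :: real
  assumes finite_\<Omega>: "finite \<Omega>" and \<Omega>_nonempty: "\<Omega> \<noteq> {}" and finite_I: "finite I"
    and d_pos: "1 \<le> d" and card_\<Gamma>: "\<And>i. i \<in> I \<Longrightarrow> card (\<Gamma> i \<inter> I) \<le> d"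
    and independent: "\<And>i S. i \<in> I \<Longrightarrow> S \<subseteq> I - \<Gamma> i - {i} \<Longrightarrow>
       real (card {\<omega>\<in>\<Omega>. A i \<omega> \<and> (\<forall>j\<in>S. \<not> A j \<omega>)}) \<le> P * real (card {\<omega>\<in>\<Omega>. \<forall>j\<in>S. \<not> A j \<omega>})"
    and P_nonneg: "0 \<le> P" and P_small: "4 * real d * P \<le> 1"
begin

definition avoiding :: "'i set \<Rightarrow> 'b set" where
  "avoiding S = {\<omega>\<in>\<Omega>. \<forall>j\<in>S. \<not> A j \<omega>}"

lemma finite_avoiding: "finite (avoiding S)"
  using finite_\<Omega> by (simp add: avoiding_def)

lemma card_avoiding_subset_le:
  assumes "S' \<subseteq> S" "finite S"
  shows "card (avoiding S') \<le> card (avoiding S) + (\<Sum>j\<in>S - S'. card {\<omega>\<in>avoiding S'. A j \<omega>})"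
proof -
  have "avoiding S' \<subseteq> avoiding S \<union> (\<Union>j\<in>S - S'. {\<omega>\<in>avoiding S'. A j \<omega>})"
    using assms by (auto simp: avoiding_def)
  then have "card (avoiding S') \<le> card (avoiding S \<union> (\<Union>j\<in>S - S'. {\<omega>\<in>avoiding S'. A j \<omega>}))"
    using assms finite_avoiding by (intro card_mono) auto
  also have "\<dots> \<le> card (avoiding S) + card (\<Union>j\<in>S - S'. {\<omega>\<in>avoiding S'. A j \<omega>})"
    by (rule card_Un_le)
  also have "\<dots> \<le> card (avoiding S) + (\<Sum>j\<in>S - S'. card {\<omega>\<in>avoiding S'. A j \<omega>})"
    using assms by (intro add_left_mono card_UN_le) auto
  finally show ?thesis .
qed

lemma card_avoiding_le_twice:
  assumes "S' \<subseteq> S" "finite S" "card (S - S') \<le> d"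
    and small: "\<And>j. j \<in> S - S' \<Longrightarrow>
      real (card {\<omega>\<in>avoiding S'. A j \<omega>}) \<le> real (card (avoiding S')) / (2 * real d)"
  shows "real (card (avoiding S')) \<le> 2 * real (card (avoiding S))"
proof -
  have "real (card (avoiding S'))
        \<le> real (card (avoiding S)) + (\<Sum>j\<in>S - S'. real (card {\<omega>\<in>avoiding S'. A j \<omega>}))"
    using card_avoiding_subset_le[OF assms(1,2)] by (simp flip: of_nat_sum)
  also have "\<dots> \<le> real (card (avoiding S)) + (\<Sum>j\<in>S - S'. real (card (avoiding S')) / (2 * real d))"
    using small by (intro add_left_mono sum_mono) auto
  also have "\<dots> \<le> real (card (avoiding S)) + real d * (real (card (avoiding S')) / (2 * real d))"
    using assms(3)
      mult_right_mono[of "real (card (S - S'))" "real d" "real (card (avoiding S')) / (2 * real d)"]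
    by simp
  also have "\<dots> = real (card (avoiding S)) + real (card (avoiding S')) / 2"
    using d_pos by simp
  finally show ?thesis by simp
qed

text \<open>The inductive core of the symmetric local lemma, with conditional probabilities written as
  ratios of cardinalities.\<close>

lemma conditional_bound:
  assumes "S \<subseteq> I" "i \<in> I - S"
  shows "real (card {\<omega>\<in>avoiding S. A i \<omega>}) \<le> real (card (avoiding S)) / (2 * real d)"
  using assms
proof (induction "card S" arbitrary: S i rule: less_induct)
  case less
  define S' where "S' = S - \<Gamma> i"
  have finS: "finite S" using less.prems finite_I finite_subset by blast
  have "{\<omega>\<in>avoiding S'. A i \<omega>} = {\<omega>\<in>\<Omega>. A i \<omega> \<and> (\<forall>j\<in>S'. \<not> A j \<omega>)}"
    by (auto simp: avoiding_def)
  then have far: "real (card {\<omega>\<in>avoiding S'. A i \<omega>}) \<le> P * real (card (avoiding S'))"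
    using independent[of i S'] less.prems by (auto simp: S'_def avoiding_def)
  have "real (card (avoiding S')) \<le> 2 * real (card (avoiding S))"
  proof (rule card_avoiding_le_twice)
    have "card (S - S') \<le> card (\<Gamma> i \<inter> I)"
      using less.prems finite_I by (intro card_mono) (auto simp: S'_def)
    then show "card (S - S') \<le> d" using card_\<Gamma> less.prems by fastforce
    fix j assume j: "j \<in> S - S'"
    then have "card S' < card S"
      using finS by (intro psubset_card_mono) (auto simp: S'_def)
    then show "real (card {\<omega>\<in>avoiding S'. A j \<omega>}) \<le> real (card (avoiding S')) / (2 * real d)"
      using less.hyps[of S' j] less.prems j by (auto simp: S'_def)
  qed (use finS in \<open>auto simp: S'_def\<close>)
  then have "real (card {\<omega>\<in>avoiding S'. A i \<omega>}) \<le> P * (2 * real (card (avoiding S)))"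
    using far P_nonneg by (meson mult_left_mono order_trans)
  moreover have "real (card {\<omega>\<in>avoiding S. A i \<omega>}) \<le> real (card {\<omega>\<in>avoiding S'. A i \<omega>})"
    using finite_\<Omega> by (intro of_nat_mono card_mono) (auto simp: avoiding_def S'_def)
  moreover have "P * (2 * real (card (avoiding S))) \<le> real (card (avoiding S)) / (2 * real d)"
    using mult_right_mono[OF P_small, of "real (card (avoiding S))"] d_pos
    by (simp add: field_simps)
  ultimately show ?case by linarith
qed

lemma card_avoiding_ge:
  assumes "S \<subseteq> I"
  shows "(1 - 1 / (2 * real d)) ^ card S * real (card \<Omega>) \<le> real (card (avoiding S))"
proof -
  have "finite S" using assms finite_I finite_subset by blast
  then show ?thesis using assms
  proof (induction S rule: finite_induct)
    case empty
    then show ?case by (simp add: avoiding_def)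
  next
    case (insert i S)
    have "avoiding (insert i S) = avoiding S - {\<omega>\<in>avoiding S. A i \<omega>}"
      by (auto simp: avoiding_def)
    then have "real (card (avoiding (insert i S)))
               = real (card (avoiding S)) - real (card {\<omega>\<in>avoiding S. A i \<omega>})"
      using finite_avoiding by (simp add: card_Diff_subset of_nat_diff card_mono)
    also have "\<dots> \<ge> (1 - 1 / (2 * real d)) * real (card (avoiding S))"
      using conditional_bound[of S i] insert by (simp add: algebra_simps)
    moreover have "(1 - 1 / (2 * real d)) * ((1 - 1 / (2 * real d)) ^ card S * real (card \<Omega>))
                   \<le> (1 - 1 / (2 * real d)) * real (card (avoiding S))"
      using insert d_pos by (intro mult_left_mono) auto
    ultimately show ?case using insert by simp
  qed
qed

theorem all_avoidable: "\<exists>\<omega>\<in>\<Omega>. \<forall>i\<in>I. \<not> A i \<omega>"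
proof -
  have "0 < (1 - 1 / (2 * real d)) ^ card I * real (card \<Omega>)"
    using d_pos finite_\<Omega> \<Omega>_nonempty by (simp add: card_gt_0_iff)
  then have "avoiding I \<noteq> {}" using card_avoiding_ge[of I] by auto
  then show ?thesis by (auto simp: avoiding_def)
qed

end

section \<open>Labels and the edge colouring rule\<close>

definition vertex_labels :: "nat \<Rightarrow> nat \<Rightarrow> (nat \<times> nat) set" where
  "vertex_labels p q = {1..p} \<times> {3..2 * p + q}"

definition edge_labels :: "nat \<Rightarrow> (nat \<times> nat) set" where
  "edge_labels q = {1..q} \<times> {1..2}"

text \<open>A vertex is labelled \<open>(c\<^sub>1, c\<^sub>3)\<close> with \<open>c\<^sub>3 \<ge> 3\<close>, an edge \<open>(c\<^sub>2, w)\<close> with a spare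
  colour \<open>w \<in> {1, 2}\<close>. An edge whose ends share \<open>c\<^sub>3\<close> takes that colour, which gives (V);
  otherwise it takes the sum \<open>c\<^sub>1 u + c\<^sub>1 v + c\<^sub>2\<close>, unless the sum collides with the \<open>c\<^sub>3\<close>
  of an end, in which case it falls back to \<open>w\<close>.\<close>

definition edge_colour :: "nat \<times> nat \<Rightarrow> nat \<times> nat \<Rightarrow> nat \<times> nat \<Rightarrow> nat" where
  "edge_colour a b r = (if snd b = snd a then snd a
     else if fst b + fst a + fst r = snd b \<or> fst b + fst a + fst r = snd a then snd r
     else fst b + fst a + fst r)"

definition conflict :: "nat \<times> nat \<Rightarrow> nat \<times> nat \<Rightarrow> nat \<times> nat \<Rightarrow> bool" where
  "conflict a b r \<longleftrightarrow> snd b = snd a \<or> fst b + fst a + fst r = snd b \<or> fst b + fst a + fst r = snd a"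

lemma edge_colour_commute: "edge_colour a b r = edge_colour b a r"
  unfolding edge_colour_def by (auto simp: add.commute)

lemma edge_colour_no_conflict: "\<not> conflict a b r \<Longrightarrow> edge_colour a b r = fst b + fst a + fst r"
  unfolding conflict_def edge_colour_def by auto

lemma edge_colour_in_range:
  assumes "a \<in> vertex_labels p q" "b \<in> vertex_labels p q" "r \<in> edge_labels q"
  shows "edge_colour a b r \<in> {1..2 * p + q}"
  using assms by (auto simp: edge_colour_def vertex_labels_def edge_labels_def)

locale palette =
  fixes p q :: nat
  assumes p_pos: "1 \<le> p" and q_pos: "1 \<le> q"
begin

abbreviation n\<^sub>3 :: nat where "n\<^sub>3 \<equiv> 2 * p + q - 2"

abbreviation label_pairs :: "((nat \<times> nat) \<times> (nat \<times> nat)) set" where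
  "label_pairs \<equiv> vertex_labels p q \<times> edge_labels q"

abbreviation label_prob :: "(nat \<times> nat \<Rightarrow> nat \<times> nat \<Rightarrow> bool) \<Rightarrow> real" where
  "label_prob \<equiv> pair_prob (vertex_labels p q) (edge_labels q)"

lemma card_vertex_labels: "card (vertex_labels p q) = p * n\<^sub>3"
  by (simp add: vertex_labels_def card_cartesian_product)

lemma card_edge_labels: "card (edge_labels q) = 2 * q"
  by (simp add: edge_labels_def card_cartesian_product)

lemma q_le_n\<^sub>3: "q \<le> n\<^sub>3"
  using p_pos by simp

lemma n\<^sub>3_pos: "0 < real n\<^sub>3"
  using p_pos q_pos by simp

lemma pair_prob_bound:
  assumes "card {x\<in>label_pairs. Q (fst x) (snd x)} \<le> n"
  shows "label_prob Q \<le> real n / (2 * real p * real q * real n\<^sub>3)"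
  using pair_prob_le[OF assms] by (simp add: card_vertex_labels card_edge_labels mult_ac)

lemma pair_prob_fst_vertex:
  assumes "k \<in> {1..p}"
  shows "label_prob (\<lambda>s r. fst s = k) = 1 / real p"
proof -
  have "{x\<in>label_pairs. fst (fst x) = k} = ({k} \<times> {3..2*p+q}) \<times> edge_labels q"
    using assms by (auto simp: vertex_labels_def)
  then have "card {x\<in>label_pairs. fst (fst x) = k} = n\<^sub>3 * (2 * q)"
    by (simp add: card_cartesian_product card_edge_labels)
  then show ?thesis
    using n\<^sub>3_pos p_pos q_pos
    by (simp add: pair_prob_def card_vertex_labels card_edge_labels field_simps del: of_nat_diff)
qed

lemma pair_prob_fst_edge:
  assumes "k \<in> {1..q}"
  shows "label_prob (\<lambda>s r. fst r = k) = 1 / real q"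
proof -
  have "{x\<in>label_pairs. fst (snd x) = k} = vertex_labels p q \<times> ({k} \<times> {1..2})"
    using assms by (auto simp: edge_labels_def)
  then have "card {x\<in>label_pairs. fst (snd x) = k} = p * n\<^sub>3 * 2"
    by (simp add: card_cartesian_product card_vertex_labels)
  then show ?thesis
    using n\<^sub>3_pos p_pos q_pos
    by (simp add: pair_prob_def card_vertex_labels card_edge_labels field_simps del: of_nat_diff)
qed

lemma pair_prob_conflict:
  assumes "a \<in> vertex_labels p q"
  shows "label_prob (conflict a) \<le> 3 / real q"
proof -
  let ?S\<^sub>1 = "(\<lambda>(c, r). ((c, snd a), r)) ` ({1..p} \<times> edge_labels q)"
  let ?S\<^sub>2 = "(\<lambda>(b, w). (b, (snd a - fst b - fst a, w))) ` (vertex_labels p q \<times> {1..(2::nat)})"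
  let ?S\<^sub>3 = "(\<lambda>(c, r). ((c, c + fst a + fst r), r)) ` ({1..p} \<times> edge_labels q)"
  have "{x\<in>label_pairs. conflict a (fst x) (snd x)} \<subseteq> ?S\<^sub>1 \<union> ?S\<^sub>2 \<union> ?S\<^sub>3"
  proof
    fix x
    assume x: "x \<in> {x\<in>label_pairs. conflict a (fst x) (snd x)}"
    obtain c y y' w where xe: "x = ((c, y), (y', w))" by (metis prod.collapse)
    consider "y = snd a" | "c + fst a + y' = snd a" | "c + fst a + y' = y"
      using x xe by (auto simp: conflict_def)
    then show "x \<in> ?S\<^sub>1 \<union> ?S\<^sub>2 \<union> ?S\<^sub>3"
    proof cases
      case 1
      then show ?thesis
        using x xe by (auto simp: vertex_labels_def intro!: image_eqI[where x = "(c, (y', w))"])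
    next
      case 2
      then show ?thesis
        using x xe by (auto simp: edge_labels_def intro!: image_eqI[where x = "((c, y), w)"])
    next
      case 3
      then show ?thesis
        using x xe by (auto simp: vertex_labels_def intro!: image_eqI[where x = "(c, (y', w))"])
    qed
  qed
  then have "card {x\<in>label_pairs. conflict a (fst x) (snd x)}
             \<le> card (?S\<^sub>1 \<union> ?S\<^sub>2 \<union> ?S\<^sub>3)"
    by (intro card_mono) (auto simp: vertex_labels_def edge_labels_def)
  also have "\<dots> \<le> card ?S\<^sub>1 + card ?S\<^sub>2 + card ?S\<^sub>3"
    by (meson card_Un_le add_right_mono order_trans)
  also have "\<dots> \<le> p * (2 * q) + p * n\<^sub>3 * 2 + p * (2 * q)"
    by (intro add_mono order_trans[OF card_image_times_le])
      (auto simp: vertex_labels_def edge_labels_def card_cartesian_product)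
  finally have "label_prob (conflict a)
                \<le> real (p * (2 * q) + p * n\<^sub>3 * 2 + p * (2 * q)) / (2 * real p * real q * real n\<^sub>3)"
    by (rule pair_prob_bound)
  also have "\<dots> = 2 / real n\<^sub>3 + 1 / real q"
    using p_pos n\<^sub>3_pos q_pos by (simp add: field_simps del: of_nat_diff)
  also have "\<dots> \<le> 3 / real q"
  proof -
    have "2 / real n\<^sub>3 \<le> 2 / real q"
      using q_le_n\<^sub>3 q_pos by (intro divide_left_mono) auto
    then show ?thesis by simp
  qed
  finally show ?thesis .
qed

lemma card_edge_colour_own:
  assumes a: "a \<in> vertex_labels p q"
  shows "card {x\<in>label_pairs. edge_colour a (fst x) (snd x) = snd a} \<le> p * (2 * q)"
proof -
  let ?S = "(\<lambda>(c, r). ((c, snd a), r)) ` ({1..p} \<times> edge_labels q)"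
  have fin: "finite (edge_labels q)" by (simp add: edge_labels_def)
  have "{x\<in>label_pairs. edge_colour a (fst x) (snd x) = snd a} \<subseteq> ?S"
  proof
    fix x assume x: "x \<in> {x\<in>label_pairs. edge_colour a (fst x) (snd x) = snd a}"
    obtain c y r where xe: "x = ((c, y), r)" by (metis prod.collapse)
    have "y = snd a"
      using x xe a
      by (auto simp: edge_colour_def vertex_labels_def edge_labels_def split: if_splits)
    then show "x \<in> ?S"
      using x xe by (auto simp: vertex_labels_def intro!: image_eqI[where x = "(c, r)"])
  qed
  then have "card {x\<in>label_pairs. edge_colour a (fst x) (snd x) = snd a} \<le> card ?S"
    using fin by (intro card_mono) auto
  also have "\<dots> \<le> p * (2 * q)"
    using card_image_times_le[OF _ fin, of "{1..p}"] by (simp add: card_edge_labels)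
  finally show ?thesis .
qed

lemma card_edge_colour_spare:
  assumes a: "a \<in> vertex_labels p q" and k: "k \<le> 2"
  shows "card {x\<in>label_pairs. edge_colour a (fst x) (snd x) = k} \<le> p * n\<^sub>3 + p * q"
proof -
  let ?S\<^sub>2 = "(\<lambda>(b, w). (b, (snd a - fst b - fst a, w))) ` (vertex_labels p q \<times> {k})"
  let ?S\<^sub>3 = "(\<lambda>(c, y). ((c, c + fst a + y), (y, k))) ` ({1..p} \<times> {1..q})"
  have fin: "finite (vertex_labels p q)" by (simp add: vertex_labels_def)
  have "{x\<in>label_pairs. edge_colour a (fst x) (snd x) = k} \<subseteq> ?S\<^sub>2 \<union> ?S\<^sub>3"
  proof
    fix x assume x: "x \<in> {x\<in>label_pairs. edge_colour a (fst x) (snd x) = k}"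
    obtain c y y' w where xe: "x = ((c, y), (y', w))" by (metis prod.collapse)
    have "y \<noteq> snd a" using x xe a k by (auto simp: edge_colour_def vertex_labels_def)
    then have "c + fst a + y' = y \<or> c + fst a + y' = snd a" and "w = k"
      using x xe a k
      by (auto simp: edge_colour_def vertex_labels_def edge_labels_def split: if_splits)
    then show "x \<in> ?S\<^sub>2 \<union> ?S\<^sub>3"
      using x xe by (auto simp: vertex_labels_def edge_labels_def
          intro!: image_eqI[where x = "(c, y')"] image_eqI[where x = "((c, y), w)"])
  qed
  then have "card {x\<in>label_pairs. edge_colour a (fst x) (snd x) = k}
             \<le> card (?S\<^sub>2 \<union> ?S\<^sub>3)"
    using fin by (intro card_mono) auto
  also have "\<dots> \<le> card ?S\<^sub>2 + card ?S\<^sub>3"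
    by (rule card_Un_le)
  also have "\<dots> \<le> p * n\<^sub>3 + p * q"
    using fin card_image_times_le[of "vertex_labels p q" "{k}"]
      card_image_times_le[of "{1..p}" "{1..q}"]
    by (intro add_mono) (simp_all add: card_vertex_labels)
  finally show ?thesis .
qed

lemma card_edge_colour_sum:
  assumes k: "k \<noteq> snd a" "3 \<le> k"
  shows "card {x\<in>label_pairs. edge_colour a (fst x) (snd x) = k} \<le> p * n\<^sub>3 * 2"
proof -
  let ?S = "(\<lambda>(b, w). (b, (k - fst b - fst a, w))) ` (vertex_labels p q \<times> {1..(2::nat)})"
  have fin: "finite (vertex_labels p q)" by (simp add: vertex_labels_def)
  have "{x\<in>label_pairs. edge_colour a (fst x) (snd x) = k} \<subseteq> ?S"
  proof
    fix x assume x: "x \<in> {x\<in>label_pairs. edge_colour a (fst x) (snd x) = k}"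
    obtain c y y' w where xe: "x = ((c, y), (y', w))" by (metis prod.collapse)
    have "c + fst a + y' = k"
      using x xe k by (auto simp: edge_colour_def edge_labels_def split: if_splits)
    then show "x \<in> ?S"
      using x xe by (auto simp: edge_labels_def intro!: image_eqI[where x = "((c, y), w)"])
  qed
  then have "card {x\<in>label_pairs. edge_colour a (fst x) (snd x) = k} \<le> card ?S"
    using fin by (intro card_mono) auto
  also have "\<dots> \<le> p * n\<^sub>3 * 2"
    using card_image_times_le[of "vertex_labels p q" "{1..(2::nat)}"] fin
    by (simp add: card_vertex_labels)
  finally show ?thesis .
qed

lemma pair_prob_edge_colour:
  assumes a: "a \<in> vertex_labels p q"
  shows "label_prob (\<lambda>b r. edge_colour a b r = k) \<le> 1 / real q"
proof -
  have q: "real q \<le> real n\<^sub>3" using q_le_n\<^sub>3 by simp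
  consider "k = snd a" | "k \<noteq> snd a" "k \<le> 2" | "k \<noteq> snd a" "3 \<le> k" by linarith
  then show ?thesis
  proof cases
    case 1
    then have "label_prob (\<lambda>b r. edge_colour a b r = k)
               \<le> real (p * (2 * q)) / (2 * real p * real q * real n\<^sub>3)"
      using card_edge_colour_own[OF a] by (intro pair_prob_bound) simp
    also have "\<dots> = 1 / real n\<^sub>3"
      using p_pos q_pos n\<^sub>3_pos by (simp add: field_simps del: of_nat_diff)
    also have "\<dots> \<le> 1 / real q"
      using q q_pos by (intro divide_left_mono) auto
    finally show ?thesis .
  next
    case 2
    then have "label_prob (\<lambda>b r. edge_colour a b r = k)
               \<le> real (p * n\<^sub>3 + p * q) / (2 * real p * real q * real n\<^sub>3)"
      using card_edge_colour_spare[OF a] by (intro pair_prob_bound) simp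
    also have "\<dots> = 1 / (2 * real q) + 1 / (2 * real n\<^sub>3)"
      using p_pos q_pos n\<^sub>3_pos by (simp add: field_simps del: of_nat_diff)
    also have "\<dots> \<le> 1 / real q"
      using divide_left_mono[of "2 * real q" "2 * real n\<^sub>3" 1] q q_pos by (simp del: of_nat_diff)
    finally show ?thesis .
  next
    case 3
    then have "label_prob (\<lambda>b r. edge_colour a b r = k)
               \<le> real (p * n\<^sub>3 * 2) / (2 * real p * real q * real n\<^sub>3)"
      using card_edge_colour_sum by (intro pair_prob_bound) simp
    also have "\<dots> = 1 / real q"
      using p_pos q_pos n\<^sub>3_pos by (simp add: field_simps del: of_nat_diff)
    finally show ?thesis .
  qed
qed

lemma pair_prob_fst_vertex_unique:
  assumes unique: "\<And>c c'. P c \<Longrightarrow> P c' \<Longrightarrow> c = c'"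
  shows "label_prob (\<lambda>b r. P (fst b)) \<le> 1 / real p"
proof (cases "\<exists>c. P c")
  case True
  then obtain c where c: "P c" by blast
  have "{x\<in>label_pairs. P (fst (fst x))} \<subseteq> ({c} \<times> {3..2*p+q}) \<times> edge_labels q"
  proof
    fix x assume x: "x \<in> {x\<in>label_pairs. P (fst (fst x))}"
    then have "fst (fst x) = c" using unique[OF _ c] by blast
    with x show "x \<in> ({c} \<times> {3..2*p+q}) \<times> edge_labels q"
      by (auto simp: vertex_labels_def)
  qed
  then have "card {x\<in>label_pairs. P (fst (fst x))} \<le> card (({c} \<times> {3..2*p+q}) \<times> edge_labels q)"
    by (intro card_mono) (simp_all add: edge_labels_def)
  then have "card {x\<in>label_pairs. P (fst (fst x))} \<le> n\<^sub>3 * (2 * q)"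
    by (simp add: card_cartesian_product card_edge_labels)
  then have "label_prob (\<lambda>b r. P (fst b))
             \<le> real (n\<^sub>3 * (2 * q)) / (2 * real p * real q * real n\<^sub>3)"
    by (rule pair_prob_bound)
  also have "\<dots> = 1 / real p"
    using p_pos q_pos n\<^sub>3_pos by (simp add: field_simps del: of_nat_diff)
  finally show ?thesis .
next
  case False
  then show ?thesis by (simp add: pair_prob_def)
qed

end

section \<open>Asymptotic parameters\<close>

definition mean_p :: "real \<Rightarrow> real" where
  "mean_p x = x powr (5/6) * ln x powr (1/6)"

definition mean_q :: "real \<Rightarrow> real" where
  "mean_q x = x powr (2/3) * ln x powr (1/3)"

definition dev_II :: "real \<Rightarrow> real" where
  "dev_II x = 3 * x powr (1/3) * ln x powr (2/3)"

definition dev_III :: "real \<Rightarrow> real" where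
  "dev_III x = x powr (-1/6) * mean_q x"

definition dev_IV :: "real \<Rightarrow> real" where
  "dev_IV x = 5 * x powr (1/3) * ln x powr (2/3)"

definition p_upper :: "real \<Rightarrow> real" where
  "p_upper x = x powr (1/6) / ln x powr (1/6) + 1"

definition q_upper :: "real \<Rightarrow> real" where
  "q_upper x = x powr (1/3) / ln x powr (1/3) + 1"

text \<open>Union bound on the probability that a fixed vertex fails one of (I)--(IV), (VI): \<open>p\<close>
  resp.\ \<open>q\<close> colours with two tails each for (I) and (II), one event per vertex label for (III),
  one per vertex label and colour for (IV), and at most \<open>\<Delta>\<close> relevant intervals for (VI).\<close>

definition failure_bound :: "real \<Rightarrow> real" where
  "failure_bound x = (2 * p_upper x + x) * x powr (-10) + 2 * q_upper x * x powr (-4)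
     + (2 * p_upper x + q_upper x)\<^sup>2 * x powr (-10)
     + (2 * p_upper x + q_upper x) ^ 3 * x powr (-10)"

definition large_enough :: "real \<Rightarrow> bool" where
  "large_enough x \<longleftrightarrow> 3 \<le> x \<and>
     sqrt x < (x / 3) / p_upper x \<and>
     dev_II x < (x / 3) / q_upper x \<and>
     x \<le> x powr (5/3) * ln x powr (1/3) / 3 \<and>
     10 * ln x \<le> (sqrt x)\<^sup>2 / (2 * (mean_p x + sqrt x)) \<and>
     4 * ln x \<le> (dev_II x)\<^sup>2 / (2 * (mean_q x + dev_II x)) \<and>
     10 * ln x \<le> (dev_III x)\<^sup>2 / (2 * (3 * mean_q x + dev_III x)) \<and>
     10 * ln x \<le> (dev_IV x)\<^sup>2 / (2 * (mean_q x + dev_IV x)) \<and>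
     4 * (x + x\<^sup>2) * failure_bound x \<le> 1"

lemma eventually_large_enough: "eventually large_enough at_top"
  unfolding large_enough_def
proof (intro eventually_conj)
  show "eventually (\<lambda>x::real. 3 \<le> x) at_top"
    by real_asymp
  show "eventually (\<lambda>x. sqrt x < (x / 3) / p_upper x) at_top"
    unfolding p_upper_def by real_asymp
  show "eventually (\<lambda>x. dev_II x < (x / 3) / q_upper x) at_top"
    unfolding dev_II_def q_upper_def by real_asymp
  show "eventually (\<lambda>x::real. x \<le> x powr (5/3) * ln x powr (1/3) / 3) at_top"
    by real_asymp
  show "eventually (\<lambda>x. 10 * ln x \<le> (sqrt x)\<^sup>2 / (2 * (mean_p x + sqrt x))) at_top"
    unfolding mean_p_def by real_asymp
  show "eventually (\<lambda>x. 4 * ln x \<le> (dev_II x)\<^sup>2 / (2 * (mean_q x + dev_II x))) at_top"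
    unfolding mean_q_def dev_II_def by real_asymp
  show "eventually (\<lambda>x. 10 * ln x \<le> (dev_III x)\<^sup>2 / (2 * (3 * mean_q x + dev_III x))) at_top"
    unfolding mean_q_def dev_III_def by real_asymp
  show "eventually (\<lambda>x. 10 * ln x \<le> (dev_IV x)\<^sup>2 / (2 * (mean_q x + dev_IV x))) at_top"
    unfolding mean_q_def dev_IV_def by real_asymp
  show "eventually (\<lambda>x. 4 * (x + x\<^sup>2) * failure_bound x \<le> 1) at_top"
    unfolding failure_bound_def p_upper_def q_upper_def by real_asymp
qed

lemma div_p_lower_eq:
  assumes "1 < (x::real)"
  shows "x / (x powr (1/6) / ln x powr (1/6)) = mean_p x"
proof -
  have "x = x powr (1/6) * x powr (5/6)" using assms by (simp flip: powr_add)
  then show ?thesis unfolding mean_p_def using assms by (simp add: field_simps)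
qed

lemma div_q_lower_eq:
  assumes "1 < (x::real)"
  shows "x / (x powr (1/3) / ln x powr (1/3)) = mean_q x"
proof -
  have "x = x powr (1/3) * x powr (2/3)" using assms by (simp flip: powr_add)
  then show ?thesis unfolding mean_q_def using assms by (simp add: field_simps)
qed

lemma mean_q_mult_eq:
  assumes "0 < (x::real)"
  shows "mean_q x * x / 3 = x powr (5/3) * ln x powr (1/3) / 3"
proof -
  have "x powr (2/3) * x = x powr (2/3) * x powr 1" using assms by simp
  also have "\<dots> = x powr (5/3)" by (subst powr_add[symmetric]) simp
  finally have "x powr (2/3) * x = x powr (5/3)" .
  then show ?thesis unfolding mean_q_def by (simp add: ac_simps)
qed

lemma exp_tail_le_powr:
  fixes x :: real
  assumes "K * ln x \<le> t\<^sup>2 / (2 * M)" "0 < x"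
  shows "exp (- t\<^sup>2 / (2 * M)) \<le> x powr (- K)"
  using assms by (simp add: powr_def)

section \<open>Properties (I)--(VI) of the colourings\<close>

definition c1_balanced_at ::
    "'a set \<Rightarrow> ('a \<Rightarrow> 'a \<Rightarrow> bool) \<Rightarrow> nat \<Rightarrow> ('a \<Rightarrow> nat) \<Rightarrow> 'a \<Rightarrow> bool" where
  "c1_balanced_at V E D c1 v \<longleftrightarrow>
     (real (deg V E v) \<ge> real D / 3 \<longrightarrow>
        (\<forall>k\<in>{1..par_p D}.
           \<bar>real (card {u \<in> nbrs V E v. c1 u = k}) - real (deg V E v) / real (par_p D)\<bar>
             \<le> sqrt (real D)))"

definition c2_balanced_at ::
    "'a set \<Rightarrow> ('a \<Rightarrow> 'a \<Rightarrow> bool) \<Rightarrow> nat \<Rightarrow> ('a set \<Rightarrow> nat) \<Rightarrow> 'a \<Rightarrow> bool" where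
  "c2_balanced_at V E D c2 v \<longleftrightarrow>
     (real (deg V E v) \<ge> real D / 3 \<longrightarrow>
        (\<forall>k\<in>{1..par_q D}.
           \<bar>real (card {u \<in> nbrs V E v. c2 {u, v} = k}) - real (deg V E v) / real (par_q D)\<bar>
             \<le> 3 * real D powr (1/3) * ln (real D) powr (2/3)))"

definition c3_sum_rule_at ::
    "'a set \<Rightarrow> ('a \<Rightarrow> 'a \<Rightarrow> bool) \<Rightarrow> nat \<Rightarrow> real \<Rightarrow>
      ('a \<Rightarrow> nat) \<Rightarrow> ('a set \<Rightarrow> nat) \<Rightarrow> ('a set \<Rightarrow> nat) \<Rightarrow> 'a \<Rightarrow> bool" where
  "c3_sum_rule_at V E D \<epsilon> c1 c2 c3e v \<longleftrightarrow>
     real (card {u \<in> nbrs V E v. c3e {u, v} = c1 u + c1 v + c2 {u, v}})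
       \<ge> real (deg V E v) - (3 + \<epsilon>) * real D powr (2/3) * ln (real D) powr (1/3)"

definition c3_sparse_at ::
    "'a set \<Rightarrow> ('a \<Rightarrow> 'a \<Rightarrow> bool) \<Rightarrow> nat \<Rightarrow> ('a set \<Rightarrow> nat) \<Rightarrow> 'a \<Rightarrow> bool" where
  "c3_sparse_at V E D c3e v \<longleftrightarrow>
     (\<forall>k\<in>{1..2 * par_p D + par_q D}.
        real (card {u \<in> nbrs V E v. c3e {u, v} = k})
          \<le> real D powr (2/3) * ln (real D) powr (1/3)
            + 5 * real D powr (1/3) * ln (real D) powr (2/3))"

definition c3_consistent_at ::
    "'a set \<Rightarrow> ('a \<Rightarrow> 'a \<Rightarrow> bool) \<Rightarrow> ('a \<Rightarrow> nat) \<Rightarrow> ('a set \<Rightarrow> nat) \<Rightarrow> 'a \<Rightarrow> bool" where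
  "c3_consistent_at V E c3v c3e v \<longleftrightarrow> (\<forall>u\<in>nbrs V E v. c3v u = c3v v \<longrightarrow> c3e {u, v} = c3v v)"

definition S_spread_at ::
    "'a set \<Rightarrow> ('a \<Rightarrow> 'a \<Rightarrow> bool) \<Rightarrow> nat \<Rightarrow> (nat \<Rightarrow> nat \<Rightarrow> real) \<Rightarrow> ('a \<Rightarrow> nat) \<Rightarrow> 'a \<Rightarrow> bool" where
  "S_spread_at V E D R c1 v \<longleftrightarrow>
     (real (deg V E v) \<ge> real D / 3 \<longrightarrow>
        (\<forall>\<alpha>::nat. \<alpha> > 0 \<longrightarrow>
           real (card {u \<in> nbrs V E v. real (deg V E u) \<ge> real D / 3 \<and>
              real (par_B D * deg V E u * c1 u) + R (deg V E u) D \<in> I_int D \<alpha>})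
           \<le> real D powr (5/6) * ln (real D) powr (1/6) + sqrt (real D)))"

type_synonym 'a labelling = "'a + 'a set \<Rightarrow> nat \<times> nat"

definition c1_of :: "'a labelling \<Rightarrow> 'a \<Rightarrow> nat" where
  "c1_of f v = fst (f (Inl v))"

definition c3v_of :: "'a labelling \<Rightarrow> 'a \<Rightarrow> nat" where
  "c3v_of f v = snd (f (Inl v))"

definition c2_of :: "'a labelling \<Rightarrow> 'a set \<Rightarrow> nat" where
  "c2_of f e = fst (f (Inr e))"

text \<open>Well defined on edges since \<open>edge_colour\<close> is symmetric in the labels of the two ends.\<close>

definition c3e_of :: "'a labelling \<Rightarrow> 'a set \<Rightarrow> nat" where
  "c3e_of f e =
     (THE k. \<exists>u v. e = {u, v} \<and> u \<noteq> v \<and> k = edge_colour (f (Inl v)) (f (Inl u)) (f (Inr e)))"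

lemma c3e_of_doubleton:
  assumes "u \<noteq> v"
  shows "c3e_of f {u, v} = edge_colour (f (Inl v)) (f (Inl u)) (f (Inr {u, v}))"
  unfolding c3e_of_def
proof (rule the_equality)
  fix k
  assume "\<exists>u' v'. {u, v} = {u', v'} \<and> u' \<noteq> v' \<and>
    k = edge_colour (f (Inl v')) (f (Inl u')) (f (Inr {u, v}))"
  then show "k = edge_colour (f (Inl v)) (f (Inl u)) (f (Inr {u, v}))"
    by (auto simp: doubleton_eq_iff edge_colour_commute)
qed (use assms in blast)

lemma c3_consistent_at_c3e_of:
  assumes "simple_graph V E"
  shows "c3_consistent_at V E (c3v_of f) (c3e_of f) v"
  using assms by (auto simp: c3_consistent_at_def c3e_of_doubleton c3v_of_def edge_colour_def
      nbrs_def simple_graph_def)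

section \<open>The random labelling\<close>

locale colouring_setting =
  fixes V :: "'a set" and E :: "'a \<Rightarrow> 'a \<Rightarrow> bool" and D :: nat and R :: "nat \<Rightarrow> nat \<Rightarrow> real"
  assumes simple: "simple_graph V E" and max_deg: "max_degree V E D"
    and large: "large_enough (real D)"
    and S_le: "\<And>v k. v \<in> V \<Longrightarrow> k \<in> {1..par_p D} \<Longrightarrow>
      real (par_B D * deg V E v * k) + R (deg V E v) D \<le> real D ^ 2"
begin

abbreviation \<Delta> :: real where "\<Delta> \<equiv> real D"
abbreviation p :: nat where "p \<equiv> par_p D"
abbreviation q :: nat where "q \<equiv> par_q D"
abbreviation N :: "'a \<Rightarrow> 'a set" where "N v \<equiv> nbrs V E v"

lemma finite_V: "finite V"
  using simple by (simp add: simple_graph_def)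

lemma nbrsD: "u \<in> N v \<Longrightarrow> E v u \<and> u \<in> V \<and> u \<noteq> v"
  using simple by (auto simp: nbrs_def simple_graph_def)

lemma nbrs_sym: "u \<in> N v \<Longrightarrow> v \<in> N u"
  using simple by (auto simp: nbrs_def simple_graph_def)

lemma finite_nbrs: "finite (N v)"
  using finite_V by (simp add: nbrs_def)

lemma card_nbrs: "card (N v) = deg V E v"
  by (simp add: deg_def)

lemma deg_le: "v \<in> V \<Longrightarrow> deg V E v \<le> D"
  using max_deg finite_V by (auto simp: max_degree_def)

lemma \<Delta>_ge_3: "3 \<le> \<Delta>"
  using large by (simp add: large_enough_def)

lemma ln_\<Delta>_pos: "0 < ln \<Delta>"
  using \<Delta>_ge_3 by simp

lemma p_ge: "\<Delta> powr (1/6) / ln \<Delta> powr (1/6) \<le> real p"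
  unfolding par_p_def by (rule real_nat_ceiling_ge)

lemma q_ge: "\<Delta> powr (1/3) / ln \<Delta> powr (1/3) \<le> real q"
  unfolding par_q_def by (rule real_nat_ceiling_ge)

lemma p_le_upper: "real p \<le> p_upper \<Delta>"
  using ln_\<Delta>_pos by (simp add: par_p_def p_upper_def)

lemma q_le_upper: "real q \<le> q_upper \<Delta>"
  using ln_\<Delta>_pos by (simp add: par_q_def q_upper_def)

lemma p_pos: "1 \<le> p"
proof -
  have "0 < \<Delta> powr (1/6) / ln \<Delta> powr (1/6)" using ln_\<Delta>_pos \<Delta>_ge_3 by simp
  then show ?thesis using p_ge by linarith
qed

lemma q_pos: "1 \<le> q"
proof -
  have "0 < \<Delta> powr (1/3) / ln \<Delta> powr (1/3)" using ln_\<Delta>_pos \<Delta>_ge_3 by simp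
  then show ?thesis using q_ge by linarith
qed

sublocale palette p q
  using p_pos q_pos by unfold_locales

lemma deg_div_p_le: "d \<le> D \<Longrightarrow> real d / real p \<le> mean_p \<Delta>"
proof -
  assume "d \<le> D"
  then have "real d / real p \<le> \<Delta> / real p" using p_pos by (simp add: divide_right_mono)
  also have "\<dots> \<le> \<Delta> / (\<Delta> powr (1/6) / ln \<Delta> powr (1/6))"
    using p_ge p_pos ln_\<Delta>_pos \<Delta>_ge_3 by (intro divide_left_mono mult_pos_pos) auto
  also have "\<dots> = mean_p \<Delta>" using \<Delta>_ge_3 by (intro div_p_lower_eq) simp
  finally show ?thesis .
qed

lemma deg_div_q_le: "d \<le> D \<Longrightarrow> real d / real q \<le> mean_q \<Delta>"
proof -
  assume "d \<le> D"
  then have "real d / real q \<le> \<Delta> / real q" using q_pos by (simp add: divide_right_mono)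
  also have "\<dots> \<le> \<Delta> / (\<Delta> powr (1/3) / ln \<Delta> powr (1/3))"
    using q_ge q_pos ln_\<Delta>_pos \<Delta>_ge_3 by (intro divide_left_mono mult_pos_pos) auto
  also have "\<dots> = mean_q \<Delta>" using \<Delta>_ge_3 by (intro div_q_lower_eq) simp
  finally show ?thesis .
qed

lemma mean_p_pos: "0 < mean_p \<Delta>"
  using \<Delta>_ge_3 ln_\<Delta>_pos by (simp add: mean_p_def)

lemma mean_q_pos: "0 < mean_q \<Delta>"
  using \<Delta>_ge_3 ln_\<Delta>_pos by (simp add: mean_q_def)

lemma mean_q_less_B: "mean_q \<Delta> < real (par_B D)"
proof -
  have "mean_q \<Delta> \<le> real (nat \<lceil>\<Delta> powr (2/3) * ln \<Delta> powr (1/3)\<rceil>)"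
    unfolding mean_q_def by (rule real_nat_ceiling_ge)
  moreover have "0 < real (nat \<lceil>\<Delta> powr (1/3) * ln \<Delta> powr (2/3)\<rceil>)"
    using \<Delta>_ge_3 ln_\<Delta>_pos by simp
  ultimately show ?thesis unfolding par_B_def of_nat_add of_nat_mult of_nat_numeral by linarith
qed

definition edge_set :: "'a set set" where
  "edge_set = {{u, v} | u v. E u v}"

definition coords :: "('a + 'a set) set" where
  "coords = Inl ` V \<union> Inr ` edge_set"

definition labels :: "'a + 'a set \<Rightarrow> (nat \<times> nat) set" where
  "labels z = (case z of Inl _ \<Rightarrow> vertex_labels p q | Inr _ \<Rightarrow> edge_labels q)"

abbreviation \<Omega> :: "'a labelling set" where
  "\<Omega> \<equiv> PiE coords labels"

lemma labels_simps [simp]: "labels (Inl v) = vertex_labels p q" "labels (Inr e) = edge_labels q"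
  by (simp_all add: labels_def)

lemma finite_edge_set: "finite edge_set"
proof -
  have "edge_set \<subseteq> (\<lambda>(u, v). {u, v}) ` (V \<times> V)"
    using simple by (auto simp: edge_set_def simple_graph_def)
  then show ?thesis using finite_V finite_subset by blast
qed

lemma nbr_edge_in_edge_set: "u \<in> N v \<Longrightarrow> {u, v} \<in> edge_set"
  using nbrsD by (auto simp: edge_set_def insert_commute)

lemma finite_\<Omega>: "finite \<Omega>"
  using finite_V finite_edge_set
  by (intro finite_PiE) (auto simp: coords_def vertex_labels_def edge_labels_def)

lemma card_\<Omega>_pos: "0 < card \<Omega>"
  using finite_V finite_edge_set p_pos q_pos
  by (auto simp: card_PiE prod_pos card_gt_0_iff coords_def vertex_labels_def edge_labels_def)

lemma labelling_vertex: "f \<in> \<Omega> \<Longrightarrow> v \<in> V \<Longrightarrow> f (Inl v) \<in> vertex_labels p q"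
  using PiE_mem[of f coords labels "Inl v"] by (simp add: coords_def)

lemma labelling_edge: "f \<in> \<Omega> \<Longrightarrow> e \<in> edge_set \<Longrightarrow> f (Inr e) \<in> edge_labels q"
  using PiE_mem[of f coords labels "Inr e"] by (simp add: coords_def)

lemma pair_sampling_at: "pair_sampling coords labels (N v) Inl (\<lambda>u. Inr {u, v})"
proof
  show "finite coords" using finite_V finite_edge_set by (simp add: coords_def)
  show "finite (labels z)" "labels z \<noteq> {}" for z
    using p_pos q_pos by (auto simp: labels_def vertex_labels_def edge_labels_def split: sum.splits)
  show "Inl u \<in> coords \<and> Inr {u, v} \<in> coords \<and> Inl u \<noteq> Inr {u, v}" if "u \<in> N v" for u
    using that nbrsD nbr_edge_in_edge_set by (auto simp: coords_def)
  show "Inl u \<noteq> Inl w \<and> Inr {u, v} \<noteq> Inr {w, v} \<and> Inl u \<noteq> (Inr {w, v} :: 'a + 'a set)"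
    if "u \<in> N v" "w \<in> N v" "u \<noteq> w" for u w
    using that nbrsD by (auto simp: doubleton_eq_iff)
qed (rule finite_nbrs)

lemma excess_card_le:
  fixes Q :: "'a \<Rightarrow> nat \<times> nat \<Rightarrow> nat \<times> nat \<Rightarrow> bool"
  assumes mean: "(\<Sum>u\<in>N v. label_prob (Q u)) \<le> M"
    and "0 \<le> M" "0 < t" and K: "K * ln \<Delta> \<le> t\<^sup>2 / (2 * (M + t))"
  shows "real (card {f\<in>\<Omega>. M + t < real (card {u\<in>N v. Q u (f (Inl u)) (f (Inr {u, v}))})})
         \<le> \<Delta> powr (- K) * real (card \<Omega>)"
proof -
  have "real (card {f\<in>\<Omega>. M + t < real (card {u\<in>N v. Q u (f (Inl u)) (f (Inr {u, v}))})})
        \<le> real (card {f\<in>\<Omega>. M + t \<le> real (card {u\<in>N v. Q u (f (Inl u)) (f (Inr {u, v}))})})"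
    using finite_\<Omega> by (intro of_nat_mono card_mono) auto
  also have "\<dots> \<le> exp (- t\<^sup>2 / (2 * (M + t))) * real (card \<Omega>)"
    using pair_sampling.upper_tail[OF pair_sampling_at, where Q = Q and M = M and t = t] assms
    by simp
  also have "\<dots> \<le> \<Delta> powr (- K) * real (card \<Omega>)"
    using exp_tail_le_powr[OF K] \<Delta>_ge_3 by (intro mult_right_mono) auto
  finally show ?thesis .
qed

lemma deviation_card_le:
  fixes Q :: "'a \<Rightarrow> nat \<times> nat \<Rightarrow> nat \<times> nat \<Rightarrow> bool"
  assumes mean: "(\<Sum>u\<in>N v. label_prob (Q u)) = m"
    and "m \<le> M" "0 < t" "t < m" and K: "K * ln \<Delta> \<le> t\<^sup>2 / (2 * (M + t))"
  shows "real (card {f\<in>\<Omega>. \<not> \<bar>real (card {u\<in>N v. Q u (f (Inl u)) (f (Inr {u, v}))}) - m\<bar> \<le> t})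
         \<le> 2 * \<Delta> powr (- K) * real (card \<Omega>)"
proof -
  let ?c = "\<lambda>f. real (card {u\<in>N v. Q u (f (Inl u)) (f (Inr {u, v}))})"
  have tail: "exp (- t\<^sup>2 / (2 * (M + t))) \<le> \<Delta> powr (- K)"
    using exp_tail_le_powr[OF K] \<Delta>_ge_3 by simp
  have "real (card {f\<in>\<Omega>. m + t \<le> ?c f}) \<le> exp (- t\<^sup>2 / (2 * (m + t))) * real (card \<Omega>)"
    using pair_sampling.upper_tail[OF pair_sampling_at, where Q = Q and M = m and t = t] assms
    by simp
  also have "\<dots> \<le> \<Delta> powr (- K) * real (card \<Omega>)"
    using assms tail by (intro mult_right_mono order_trans[OF _ tail]) (auto simp: frac_le)
  finally have upper: "real (card {f\<in>\<Omega>. m + t \<le> ?c f}) \<le> \<Delta> powr (- K) * real (card \<Omega>)" .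
  have "real (card {f\<in>\<Omega>. ?c f \<le> m - t}) \<le> exp (- t\<^sup>2 / (2 * m)) * real (card \<Omega>)"
    using pair_sampling.lower_tail[OF pair_sampling_at, where Q = Q and m = m and t = t] assms
    by simp
  also have "\<dots> \<le> \<Delta> powr (- K) * real (card \<Omega>)"
    using assms tail by (intro mult_right_mono order_trans[OF _ tail]) (auto simp: frac_le)
  finally have lower: "real (card {f\<in>\<Omega>. ?c f \<le> m - t}) \<le> \<Delta> powr (- K) * real (card \<Omega>)" .
  have "{f\<in>\<Omega>. \<not> \<bar>?c f - m\<bar> \<le> t} \<subseteq> {f\<in>\<Omega>. m + t \<le> ?c f} \<union> {f\<in>\<Omega>. ?c f \<le> m - t}"
    by auto
  then have "card {f\<in>\<Omega>. \<not> \<bar>?c f - m\<bar> \<le> t} \<le> card {f\<in>\<Omega>. m + t \<le> ?c f} + card {f\<in>\<Omega>. ?c f \<le> m - t}"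
    using finite_\<Omega> by (intro order_trans[OF card_mono card_Un_le]) auto
  then show ?thesis using upper lower by linarith
qed

lemma c3e_of_nbr: "u \<in> N v \<Longrightarrow> c3e_of f {u, v} = edge_colour (f (Inl v)) (f (Inl u)) (f (Inr {u, v}))"
  using nbrsD by (simp add: c3e_of_doubleton)

lemma card_not_c1_balanced:
  assumes "v \<in> V"
  shows "real (card {f\<in>\<Omega>. \<not> c1_balanced_at V E D (c1_of f) v})
         \<le> real p * (2 * \<Delta> powr (-10) * real (card \<Omega>))"
proof (cases "\<Delta> / 3 \<le> real (deg V E v)")
  case False
  then show ?thesis by (simp add: c1_balanced_at_def)
next
  case True
  define m where "m = real (deg V E v) / real p"
  have "sqrt \<Delta> < (\<Delta> / 3) / p_upper \<Delta>" using large by (simp add: large_enough_def)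
  also have "\<dots> \<le> (\<Delta> / 3) / real p" using p_le_upper p_pos by (intro divide_left_mono) auto
  also have "\<dots> \<le> m" unfolding m_def using True by (intro divide_right_mono) auto
  finally have "sqrt \<Delta> < m" .
  have each: "real (card {f\<in>\<Omega>. \<not> \<bar>real (card {u\<in>N v. fst (f (Inl u)) = k}) - m\<bar> \<le> sqrt \<Delta>})
        \<le> 2 * \<Delta> powr (-10) * real (card \<Omega>)" if "k \<in> {1..p}" for k
  proof (rule deviation_card_le[where Q = "\<lambda>u b r. fst b = k" and M = "mean_p \<Delta>"])
    show "(\<Sum>u\<in>N v. label_prob (\<lambda>b r. fst b = k)) = m"
      using pair_prob_fst_vertex[OF that] by (simp add: card_nbrs m_def)
    show "m \<le> mean_p \<Delta>" using deg_div_p_le deg_le assms by (simp add: m_def)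
    show "10 * ln \<Delta> \<le> (sqrt \<Delta>)\<^sup>2 / (2 * (mean_p \<Delta> + sqrt \<Delta>))"
      using large by (simp add: large_enough_def)
  qed (use \<Delta>_ge_3 \<open>sqrt \<Delta> < m\<close> in auto)
  have cover: "{f\<in>\<Omega>. \<not> c1_balanced_at V E D (c1_of f) v}
      \<subseteq> (\<Union>k\<in>{1..p}. {f\<in>\<Omega>. \<not> \<bar>real (card {u\<in>N v. fst (f (Inl u)) = k}) - m\<bar> \<le> sqrt \<Delta>})"
    using True by (auto simp: c1_balanced_at_def c1_of_def m_def)
  have "real (card {f\<in>\<Omega>. \<not> c1_balanced_at V E D (c1_of f) v})
        \<le> real (card {1..p}) * (2 * \<Delta> powr (-10) * real (card \<Omega>))"
    by (rule card_le_card_mult_of_cover[OF _ _ each cover]) (use finite_\<Omega> in auto)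
  then show ?thesis by simp
qed

lemma card_not_c2_balanced:
  assumes "v \<in> V"
  shows "real (card {f\<in>\<Omega>. \<not> c2_balanced_at V E D (c2_of f) v})
         \<le> real q * (2 * \<Delta> powr (-4) * real (card \<Omega>))"
proof (cases "\<Delta> / 3 \<le> real (deg V E v)")
  case False
  then show ?thesis by (simp add: c2_balanced_at_def)
next
  case True
  define m where "m = real (deg V E v) / real q"
  have "dev_II \<Delta> < (\<Delta> / 3) / q_upper \<Delta>" using large by (simp add: large_enough_def)
  also have "\<dots> \<le> (\<Delta> / 3) / real q" using q_le_upper q_pos by (intro divide_left_mono) auto
  also have "\<dots> \<le> m" unfolding m_def using True by (intro divide_right_mono) auto
  finally have "dev_II \<Delta> < m" .
  have each: "real (card {f\<in>\<Omega>. \<not> \<bar>real (card {u\<in>N v. fst (f (Inr {u, v})) = k}) - m\<bar> \<le> dev_II \<Delta>})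
        \<le> 2 * \<Delta> powr (-4) * real (card \<Omega>)" if "k \<in> {1..q}" for k
  proof (rule deviation_card_le[where Q = "\<lambda>u b r. fst r = k" and M = "mean_q \<Delta>"])
    show "(\<Sum>u\<in>N v. label_prob (\<lambda>b r. fst r = k)) = m"
      using pair_prob_fst_edge[OF that] by (simp add: card_nbrs m_def)
    show "m \<le> mean_q \<Delta>" using deg_div_q_le deg_le assms by (simp add: m_def)
    show "4 * ln \<Delta> \<le> (dev_II \<Delta>)\<^sup>2 / (2 * (mean_q \<Delta> + dev_II \<Delta>))"
      using large by (simp add: large_enough_def)
    show "0 < dev_II \<Delta>" using \<Delta>_ge_3 ln_\<Delta>_pos by (simp add: dev_II_def)
  qed (use \<open>dev_II \<Delta> < m\<close> in auto)
  have cover: "{f\<in>\<Omega>. \<not> c2_balanced_at V E D (c2_of f) v}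
      \<subseteq> (\<Union>k\<in>{1..q}. {f\<in>\<Omega>. \<not> \<bar>real (card {u\<in>N v. fst (f (Inr {u, v})) = k}) - m\<bar> \<le> dev_II \<Delta>})"
    using True by (auto simp: c2_balanced_at_def c2_of_def m_def dev_II_def)
  have "real (card {f\<in>\<Omega>. \<not> c2_balanced_at V E D (c2_of f) v})
        \<le> real (card {1..q}) * (2 * \<Delta> powr (-4) * real (card \<Omega>))"
    by (rule card_le_card_mult_of_cover[OF _ _ each cover]) (use finite_\<Omega> in auto)
  then show ?thesis by simp
qed

lemma card_c3_sum_rule_ge:
  "real (card {u\<in>N v. c3e_of f {u, v} = c1_of f u + c1_of f v + c2_of f {u, v}})
   \<ge> real (deg V E v) - real (card {u\<in>N v. conflict (f (Inl v)) (f (Inl u)) (f (Inr {u, v}))})"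
proof -
  let ?conflicts = "{u\<in>N v. conflict (f (Inl v)) (f (Inl u)) (f (Inr {u, v}))}"
  have "N v - ?conflicts \<subseteq> {u\<in>N v. c3e_of f {u, v} = c1_of f u + c1_of f v + c2_of f {u, v}}"
    by (auto simp: c3e_of_nbr edge_colour_no_conflict c1_of_def c2_of_def)
  then have "card (N v - ?conflicts)
             \<le> card {u\<in>N v. c3e_of f {u, v} = c1_of f u + c1_of f v + c2_of f {u, v}}"
    using finite_nbrs by (intro card_mono) auto
  moreover have "card (N v - ?conflicts) = deg V E v - card ?conflicts"
    using finite_nbrs by (simp add: card_Diff_subset card_nbrs)
  moreover have "card ?conflicts \<le> deg V E v"
    using finite_nbrs card_mono[of "N v" ?conflicts] by (simp add: card_nbrs)
  ultimately show ?thesis by linarith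
qed

lemma card_not_c3_sum_rule:
  assumes "v \<in> V"
  shows "real (card {f\<in>\<Omega>. \<not> c3_sum_rule_at V E D (\<Delta> powr (-1/6)) (c1_of f) (c2_of f) (c3e_of f) v})
         \<le> real (card (vertex_labels p q)) * (\<Delta> powr (-10) * real (card \<Omega>))"
proof -
  let ?conflicts = "\<lambda>a f. real (card {u\<in>N v. conflict a (f (Inl u)) (f (Inr {u, v}))})"
  have each: "real (card {f\<in>\<Omega>. 3 * mean_q \<Delta> + dev_III \<Delta> < ?conflicts a f})
              \<le> \<Delta> powr (-10) * real (card \<Omega>)"
    if "a \<in> vertex_labels p q" for a
  proof (rule excess_card_le[where Q = "\<lambda>u. conflict a"])
    have "(\<Sum>u\<in>N v. label_prob (conflict a)) \<le> (\<Sum>u\<in>N v. 3 / real q)"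
      using pair_prob_conflict[OF that] by (intro sum_mono) auto
    also have "\<dots> = 3 * (real (deg V E v) / real q)"
      by (simp add: card_nbrs)
    also have "\<dots> \<le> 3 * mean_q \<Delta>"
      using deg_div_q_le[OF deg_le[OF assms]] by simp
    finally show "(\<Sum>u\<in>N v. label_prob (conflict a)) \<le> 3 * mean_q \<Delta>" .
    show "10 * ln \<Delta> \<le> (dev_III \<Delta>)\<^sup>2 / (2 * (3 * mean_q \<Delta> + dev_III \<Delta>))"
      using large by (simp add: large_enough_def)
  qed (use \<Delta>_ge_3 mean_q_pos in \<open>auto simp: dev_III_def\<close>)
  have cover: "{f\<in>\<Omega>. \<not> c3_sum_rule_at V E D (\<Delta> powr (-1/6)) (c1_of f) (c2_of f) (c3e_of f) v}
      \<subseteq> (\<Union>a\<in>vertex_labels p q. {f\<in>\<Omega>. 3 * mean_q \<Delta> + dev_III \<Delta> < ?conflicts a f})"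
  proof clarify
    fix f assume f: "f \<in> \<Omega>" and
      fail: "\<not> c3_sum_rule_at V E D (\<Delta> powr (-1/6)) (c1_of f) (c2_of f) (c3e_of f) v"
    have "(3 + \<Delta> powr (-1/6)) * \<Delta> powr (2/3) * ln \<Delta> powr (1/3) = 3 * mean_q \<Delta> + dev_III \<Delta>"
      by (simp add: mean_q_def dev_III_def algebra_simps)
    then have "3 * mean_q \<Delta> + dev_III \<Delta> < ?conflicts (f (Inl v)) f"
      using fail card_c3_sum_rule_ge[of v f] by (simp add: c3_sum_rule_at_def)
    then show "f \<in> (\<Union>a\<in>vertex_labels p q. {f\<in>\<Omega>. 3 * mean_q \<Delta> + dev_III \<Delta> < ?conflicts a f})"
      using f labelling_vertex[OF f assms] by blast
  qed
  show ?thesis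
    by (rule card_le_card_mult_of_cover[OF _ _ each cover])
      (use finite_\<Omega> in \<open>auto simp: vertex_labels_def\<close>)
qed

lemma card_not_c3_sparse:
  assumes "v \<in> V"
  shows "real (card {f\<in>\<Omega>. \<not> c3_sparse_at V E D (c3e_of f) v})
         \<le> real (card (vertex_labels p q) * (2 * p + q)) * (\<Delta> powr (-10) * real (card \<Omega>))"
proof -
  let ?count = "\<lambda>a k f. real (card {u\<in>N v. edge_colour a (f (Inl u)) (f (Inr {u, v})) = k})"
  let ?K = "vertex_labels p q \<times> {1..2 * p + q}"
  have each: "real (card {f\<in>\<Omega>. mean_q \<Delta> + dev_IV \<Delta> < ?count (fst ak) (snd ak) f})
              \<le> \<Delta> powr (-10) * real (card \<Omega>)" if "ak \<in> ?K" for ak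
  proof (rule excess_card_le[where Q = "\<lambda>u b r. edge_colour (fst ak) b r = snd ak"])
    have "(\<Sum>u\<in>N v. label_prob (\<lambda>b r. edge_colour (fst ak) b r = snd ak))
          \<le> (\<Sum>u\<in>N v. 1 / real q)"
      using pair_prob_edge_colour that by (intro sum_mono) auto
    also have "\<dots> \<le> mean_q \<Delta>"
      using deg_div_q_le[OF deg_le[OF assms]] by (simp add: card_nbrs)
    finally show "(\<Sum>u\<in>N v. label_prob
                    (\<lambda>b r. edge_colour (fst ak) b r = snd ak)) \<le> mean_q \<Delta>" .
    show "10 * ln \<Delta> \<le> (dev_IV \<Delta>)\<^sup>2 / (2 * (mean_q \<Delta> + dev_IV \<Delta>))"
      using large by (simp add: large_enough_def)
  qed (use mean_q_pos \<Delta>_ge_3 ln_\<Delta>_pos in \<open>auto simp: dev_IV_def\<close>)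
  have cover: "{f\<in>\<Omega>. \<not> c3_sparse_at V E D (c3e_of f) v}
      \<subseteq> (\<Union>ak\<in>?K. {f\<in>\<Omega>. mean_q \<Delta> + dev_IV \<Delta> < ?count (fst ak) (snd ak) f})"
  proof clarify
    fix f assume f: "f \<in> \<Omega>" and fail: "\<not> c3_sparse_at V E D (c3e_of f) v"
    then obtain k where "k \<in> {1..2 * p + q}"
      and "mean_q \<Delta> + dev_IV \<Delta> < real (card {u\<in>N v. c3e_of f {u, v} = k})"
      by (auto simp: c3_sparse_at_def mean_q_def dev_IV_def not_le)
    moreover have "{u\<in>N v. c3e_of f {u, v} = k}
                   = {u\<in>N v. edge_colour (f (Inl v)) (f (Inl u)) (f (Inr {u, v})) = k}"
      by (auto simp: c3e_of_nbr)
    ultimately show "f \<in> (\<Union>ak\<in>?K. {f\<in>\<Omega>. mean_q \<Delta> + dev_IV \<Delta> < ?count (fst ak) (snd ak) f})"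
      using f labelling_vertex[OF f assms] by (intro UN_I[of "(f (Inl v), k)"]) auto
  qed
  have "real (card {f\<in>\<Omega>. \<not> c3_sparse_at V E D (c3e_of f) v})
        \<le> real (card ?K) * (\<Delta> powr (-10) * real (card \<Omega>))"
    by (rule card_le_card_mult_of_cover[OF _ _ each cover])
      (use finite_\<Omega> in \<open>auto simp: vertex_labels_def\<close>)
  then show ?thesis by (simp add: card_cartesian_product)
qed

text \<open>Two values of \<open>c\<^sub>1\<close> at a vertex of degree at least \<open>\<Delta>/3\<close> move \<open>S\<close> by at
  least \<open>B \<Delta> / 3\<close>, which exceeds the length of the intervals \<open>I\<^sub>\<alpha>\<close>.\<close>

lemma S_interval_unique:
  assumes d: "\<Delta> / 3 \<le> real d"
    and c: "real (par_B D * d * c) + r \<in> I_int D \<alpha>"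
    and c': "real (par_B D * d * c') + r \<in> I_int D \<alpha>"
  shows "c = c'"
proof -
  let ?L = "\<Delta> powr (5/3) * ln \<Delta> powr (1/3) / 3"
  have False if lt: "c\<^sub>1 < c\<^sub>2"
    and in1: "real (par_B D * d * c\<^sub>1) + r \<in> I_int D \<alpha>"
    and in2: "real (par_B D * d * c\<^sub>2) + r \<in> I_int D \<alpha>"
    for c\<^sub>1 c\<^sub>2
  proof -
    have "real (par_B D) * real d * (real c\<^sub>2 - real c\<^sub>1) < ?L"
      using in1 in2 by (auto simp: I_int_def algebra_simps)
    moreover have "real (par_B D) * real d * 1 \<le> real (par_B D) * real d * (real c\<^sub>2 - real c\<^sub>1)"
      using lt by (intro mult_left_mono) auto
    moreover have "real (par_B D) * (\<Delta> / 3) \<le> real (par_B D) * real d"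
      using d by (intro mult_left_mono) auto
    moreover have "mean_q \<Delta> * (\<Delta> / 3) < real (par_B D) * (\<Delta> / 3)"
      using mean_q_less_B \<Delta>_ge_3 by (intro mult_strict_right_mono) auto
    moreover have "mean_q \<Delta> * (\<Delta> / 3) = ?L"
      using mean_q_mult_eq[of \<Delta>] \<Delta>_ge_3 by simp
    ultimately show False by linarith
  qed
  then show ?thesis using c c' by (metis linorder_neqE_nat)
qed

lemma S_not_in_high_interval:
  assumes "u \<in> V" "c \<in> {1..p}" "D < \<alpha>"
  shows "real (par_B D * deg V E u * c) + R (deg V E u) D \<notin> I_int D \<alpha>"
proof
  assume "real (par_B D * deg V E u * c) + R (deg V E u) D \<in> I_int D \<alpha>"
  then have "(real \<alpha> - 1) * (\<Delta> powr (5/3) * ln \<Delta> powr (1/3) / 3) < \<Delta>\<^sup>2"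
    using S_le[OF assms(1,2)] by (simp add: I_int_def)
  moreover have "\<Delta> * \<Delta> \<le> (real \<alpha> - 1) * (\<Delta> powr (5/3) * ln \<Delta> powr (1/3) / 3)"
    using assms(3) large \<Delta>_ge_3 by (intro mult_mono) (auto simp: large_enough_def)
  ultimately show False by (simp add: power2_eq_square)
qed

lemma card_not_S_spread:
  assumes "v \<in> V"
  shows "real (card {f\<in>\<Omega>. \<not> S_spread_at V E D R (c1_of f) v}) \<le> \<Delta> * (\<Delta> powr (-10) * real (card \<Omega>))"
proof -
  let ?P = "\<lambda>\<alpha> u c. \<Delta> / 3 \<le> real (deg V E u) \<and>
    real (par_B D * deg V E u * c) + R (deg V E u) D \<in> I_int D \<alpha>"
  let ?count = "\<lambda>\<alpha> f. real (card {u\<in>N v. ?P \<alpha> u (fst (f (Inl u)))})"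
  have each: "real (card {f\<in>\<Omega>. mean_p \<Delta> + sqrt \<Delta> < ?count \<alpha> f})
              \<le> \<Delta> powr (-10) * real (card \<Omega>)" for \<alpha>
  proof (rule excess_card_le[where Q = "\<lambda>u b r. ?P \<alpha> u (fst b)"])
    have "label_prob (\<lambda>b r. ?P \<alpha> u (fst b)) \<le> 1 / real p" for u
      by (rule pair_prob_fst_vertex_unique) (use S_interval_unique in blast)
    then have "(\<Sum>u\<in>N v. label_prob (\<lambda>b r. ?P \<alpha> u (fst b)))
               \<le> (\<Sum>u\<in>N v. 1 / real p)"
      by (intro sum_mono)
    also have "\<dots> \<le> mean_p \<Delta>"
      using deg_div_p_le[OF deg_le[OF assms]] by (simp add: card_nbrs)
    finally show "(\<Sum>u\<in>N v. label_prob (\<lambda>b r. ?P \<alpha> u (fst b))) \<le> mean_p \<Delta>" .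
    show "10 * ln \<Delta> \<le> (sqrt \<Delta>)\<^sup>2 / (2 * (mean_p \<Delta> + sqrt \<Delta>))"
      using large by (simp add: large_enough_def)
  qed (use mean_p_pos \<Delta>_ge_3 in auto)
  have cover: "{f\<in>\<Omega>. \<not> S_spread_at V E D R (c1_of f) v}
      \<subseteq> (\<Union>\<alpha>\<in>{1..D}. {f\<in>\<Omega>. mean_p \<Delta> + sqrt \<Delta> < ?count \<alpha> f})"
  proof clarify
    fix f assume f: "f \<in> \<Omega>" and fail: "\<not> S_spread_at V E D R (c1_of f) v"
    then obtain \<alpha> where \<alpha>: "0 < \<alpha>" "mean_p \<Delta> + sqrt \<Delta> < ?count \<alpha> f"
      by (auto simp: S_spread_at_def c1_of_def mean_p_def not_le)
    have "\<alpha> \<le> D"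
    proof (rule ccontr)
      assume "\<not> \<alpha> \<le> D"
      then have "{u\<in>N v. ?P \<alpha> u (fst (f (Inl u)))} = {}"
        using S_not_in_high_interval labelling_vertex[OF f] nbrsD
        by (fastforce simp: vertex_labels_def)
      then have "?count \<alpha> f = 0" by (simp only: card.empty of_nat_0)
      then show False using \<alpha>(2) mean_p_pos real_sqrt_ge_zero[of \<Delta>] by linarith
    qed
    then show "f \<in> (\<Union>\<alpha>\<in>{1..D}. {f\<in>\<Omega>. mean_p \<Delta> + sqrt \<Delta> < ?count \<alpha> f})"
      using f \<alpha> by auto
  qed
  have "real (card {f\<in>\<Omega>. \<not> S_spread_at V E D R (c1_of f) v})
        \<le> real (card {1..D}) * (\<Delta> powr (-10) * real (card \<Omega>))"
    by (rule card_le_card_mult_of_cover[OF _ _ each cover]) (use finite_\<Omega> in auto)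
  then show ?thesis by simp
qed

definition good_at :: "'a \<Rightarrow> 'a labelling \<Rightarrow> bool" where
  "good_at v f \<longleftrightarrow> c1_balanced_at V E D (c1_of f) v \<and> c2_balanced_at V E D (c2_of f) v \<and>
     c3_sum_rule_at V E D (\<Delta> powr (-1/6)) (c1_of f) (c2_of f) (c3e_of f) v \<and>
     c3_sparse_at V E D (c3e_of f) v \<and> S_spread_at V E D R (c1_of f) v"

lemma failure_bound_nonneg: "0 \<le> failure_bound \<Delta>"
  using ln_\<Delta>_pos by (simp add: failure_bound_def p_upper_def q_upper_def)

lemma card_vertex_labels_le_upper:
  "real (card (vertex_labels p q)) \<le> (2 * p_upper \<Delta> + q_upper \<Delta>)\<^sup>2"
  "real (card (vertex_labels p q) * (2 * p + q)) \<le> (2 * p_upper \<Delta> + q_upper \<Delta>) ^ 3"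
proof -
  have colours: "real (2 * p + q) \<le> 2 * p_upper \<Delta> + q_upper \<Delta>"
    using p_le_upper q_le_upper by simp
  have "card (vertex_labels p q) \<le> (2 * p + q) * (2 * p + q)"
    by (simp add: card_vertex_labels mult_mono)
  then have "real (card (vertex_labels p q)) \<le> real ((2 * p + q) * (2 * p + q))"
    by (simp only: of_nat_le_iff)
  also have "\<dots> = real (2 * p + q) ^ 2"
    by (simp only: of_nat_mult power2_eq_square)
  also have "\<dots> \<le> (2 * p_upper \<Delta> + q_upper \<Delta>)\<^sup>2"
    using colours by (intro power_mono) auto
  finally show labels: "real (card (vertex_labels p q)) \<le> (2 * p_upper \<Delta> + q_upper \<Delta>)\<^sup>2" .
  show "real (card (vertex_labels p q) * (2 * p + q)) \<le> (2 * p_upper \<Delta> + q_upper \<Delta>) ^ 3"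
    using mult_mono[OF labels colours] by (simp add: power3_eq_cube power2_eq_square)
qed

lemma card_not_good_at:
  assumes v: "v \<in> V"
  shows "real (card {f\<in>\<Omega>. \<not> good_at v f}) \<le> failure_bound \<Delta> * real (card \<Omega>)"
proof -
  let ?S\<^sub>1 = "{f\<in>\<Omega>. \<not> c1_balanced_at V E D (c1_of f) v}"
  let ?S\<^sub>2 = "{f\<in>\<Omega>. \<not> c2_balanced_at V E D (c2_of f) v}"
  let ?S\<^sub>3 = "{f\<in>\<Omega>. \<not> c3_sum_rule_at V E D (\<Delta> powr (-1/6)) (c1_of f) (c2_of f) (c3e_of f) v}"
  let ?S\<^sub>4 = "{f\<in>\<Omega>. \<not> c3_sparse_at V E D (c3e_of f) v}"
  let ?S\<^sub>5 = "{f\<in>\<Omega>. \<not> S_spread_at V E D R (c1_of f) v}"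
  let ?\<Omega> = "real (card \<Omega>)" and ?w = "2 * p_upper \<Delta> + q_upper \<Delta>"
  have "card {f\<in>\<Omega>. \<not> good_at v f} \<le> card (?S\<^sub>1 \<union> ?S\<^sub>2 \<union> ?S\<^sub>3 \<union> ?S\<^sub>4 \<union> ?S\<^sub>5)"
    using finite_\<Omega> by (intro card_mono) (auto simp: good_at_def)
  also have "\<dots> \<le> card ?S\<^sub>1 + card ?S\<^sub>2 + card ?S\<^sub>3 + card ?S\<^sub>4 + card ?S\<^sub>5"
    by (meson add_right_mono card_Un_le order_trans)
  finally have sum: "real (card {f\<in>\<Omega>. \<not> good_at v f})
      \<le> real (card ?S\<^sub>1) + real (card ?S\<^sub>2) + real (card ?S\<^sub>3) + real (card ?S\<^sub>4)
        + real (card ?S\<^sub>5)"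
    by linarith
  have labels: "real (card (vertex_labels p q)) \<le> ?w\<^sup>2"
    and labels_colours: "real (card (vertex_labels p q) * (2 * p + q)) \<le> ?w ^ 3"
    using card_vertex_labels_le_upper by simp_all
  have "real (card ?S\<^sub>1) \<le> p_upper \<Delta> * (2 * \<Delta> powr (-10) * ?\<Omega>)"
    using card_not_c1_balanced[OF v] mult_right_mono[OF p_le_upper, of "2 * \<Delta> powr (-10) * ?\<Omega>"]
    by simp
  moreover have "real (card ?S\<^sub>2) \<le> q_upper \<Delta> * (2 * \<Delta> powr (-4) * ?\<Omega>)"
    using card_not_c2_balanced[OF v] mult_right_mono[OF q_le_upper, of "2 * \<Delta> powr (-4) * ?\<Omega>"]
    by simp
  moreover have "real (card ?S\<^sub>3) \<le> ?w\<^sup>2 * (\<Delta> powr (-10) * ?\<Omega>)"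
    using card_not_c3_sum_rule[OF v] mult_right_mono[OF labels, of "\<Delta> powr (-10) * ?\<Omega>"] by simp
  moreover have "real (card ?S\<^sub>4) \<le> ?w ^ 3 * (\<Delta> powr (-10) * ?\<Omega>)"
    using card_not_c3_sparse[OF v] mult_right_mono[OF labels_colours, of "\<Delta> powr (-10) * ?\<Omega>"]
    by simp
  moreover have "real (card ?S\<^sub>5) \<le> \<Delta> * (\<Delta> powr (-10) * ?\<Omega>)"
    using card_not_S_spread[OF v] .
  moreover have "failure_bound \<Delta> * ?\<Omega> = p_upper \<Delta> * (2 * \<Delta> powr (-10) * ?\<Omega>)
      + q_upper \<Delta> * (2 * \<Delta> powr (-4) * ?\<Omega>) + ?w\<^sup>2 * (\<Delta> powr (-10) * ?\<Omega>)
      + ?w ^ 3 * (\<Delta> powr (-10) * ?\<Omega>) + \<Delta> * (\<Delta> powr (-10) * ?\<Omega>)"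
    unfolding failure_bound_def by algebra
  ultimately show ?thesis using sum by linarith
qed

definition coords_near :: "'a \<Rightarrow> ('a + 'a set) set" where
  "coords_near v = insert (Inl v) (Inl ` N v \<union> (\<lambda>u. Inr {u, v}) ` N v)"

definition dependent_vertices :: "'a \<Rightarrow> 'a set" where
  "dependent_vertices v = {w\<in>V. w \<noteq> v \<and> coords_near v \<inter> coords_near w \<noteq> {}}"

lemma coords_near_subset: "v \<in> V \<Longrightarrow> coords_near v \<subseteq> coords"
  using nbrsD nbr_edge_in_edge_set by (auto simp: coords_near_def coords_def)

lemma depends_on_good_at: "depends_on (coords_near v) (good_at v)"
proof (rule depends_onI)
  fix f g :: "'a labelling"
  assume agree: "\<And>z. z \<in> coords_near v \<Longrightarrow> f z = g z"
  have "c1_of f v = c1_of g v" "\<And>u. u \<in> N v \<Longrightarrow> c1_of f u = c1_of g u"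
    "\<And>u. u \<in> N v \<Longrightarrow> c2_of f {u, v} = c2_of g {u, v}"
    "\<And>u. u \<in> N v \<Longrightarrow> c3e_of f {u, v} = c3e_of g {u, v}"
    using agree by (auto simp: coords_near_def c1_of_def c2_of_def c3e_of_nbr)
  then show "good_at v f = good_at v g"
    unfolding good_at_def c1_balanced_at_def c2_balanced_at_def c3_sum_rule_at_def c3_sparse_at_def
      S_spread_at_def
    by (simp cong: conj_cong)
qed

lemma dependent_vertices_subset: "dependent_vertices v \<subseteq> N v \<union> (\<Union>u\<in>N v. N u)"
proof
  fix w assume "w \<in> dependent_vertices v"
  then obtain z where w: "w \<noteq> v" and z: "z \<in> coords_near v" "z \<in> coords_near w"
    by (auto simp: dependent_vertices_def)
  show "w \<in> N v \<union> (\<Union>u\<in>N v. N u)"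
  proof (cases z)
    case (Inl y)
    then have "y = v \<or> y \<in> N v" "y = w \<or> y \<in> N w" using z by (auto simp: coords_near_def)
    then show ?thesis using w by (auto dest: nbrs_sym)
  next
    case (Inr e)
    then obtain u u' where "u \<in> N v" "e = {u, v}" "e = {u', w}"
      using z by (auto simp: coords_near_def)
    then show ?thesis using w by (auto simp: doubleton_eq_iff)
  qed
qed

lemma card_dependent_vertices: "v \<in> V \<Longrightarrow> card (dependent_vertices v) \<le> D + D * D"
proof -
  assume v: "v \<in> V"
  have "card (dependent_vertices v) \<le> card (N v \<union> (\<Union>u\<in>N v. N u))"
    using dependent_vertices_subset finite_nbrs by (intro card_mono) auto
  also have "\<dots> \<le> card (N v) + card (\<Union>u\<in>N v. N u)"
    by (rule card_Un_le)
  also have "\<dots> \<le> card (N v) + (\<Sum>u\<in>N v. card (N u))"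
    using card_UN_le[OF finite_nbrs] by simp
  also have "\<dots> \<le> D + (\<Sum>u\<in>N v. D)"
    using v deg_le nbrsD by (intro add_mono sum_mono) (auto simp: card_nbrs)
  also have "\<dots> \<le> D + D * D"
    using deg_le[OF v] by (simp add: card_nbrs)
  finally show ?thesis .
qed

lemma card_not_good_at_avoiding:
  assumes v: "v \<in> V" and S: "S \<subseteq> V - dependent_vertices v - {v}"
  shows "real (card {f\<in>\<Omega>. \<not> good_at v f \<and> (\<forall>w\<in>S. good_at w f)})
         \<le> failure_bound \<Delta> * real (card {f\<in>\<Omega>. \<forall>w\<in>S. good_at w f})"
proof -
  have "real (card \<Omega>) * real (card {f\<in>\<Omega>. \<not> good_at v f \<and> (\<forall>w\<in>S. good_at w f)})
        = real (card {f\<in>\<Omega>. \<not> good_at v f}) * real (card {f\<in>\<Omega>. \<forall>w\<in>S. good_at w f})"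
  proof (rule card_PiE_conj_independent[where T = "coords_near v" and U = "\<Union>w\<in>S. coords_near w"])
    show "coords_near v \<subseteq> coords"
      by (rule coords_near_subset[OF v])
    show "(\<Union>w\<in>S. coords_near w) \<subseteq> coords"
      using S by (intro UN_least coords_near_subset) auto
    have "coords_near v \<inter> coords_near w = {}" if "w \<in> S" for w
      using that S unfolding dependent_vertices_def by blast
    then show "coords_near v \<inter> (\<Union>w\<in>S. coords_near w) = {}"
      by blast
    show "depends_on (coords_near v) (\<lambda>f. \<not> good_at v f)"
      by (rule depends_on_comp[OF depends_on_good_at])
    show "depends_on (\<Union>w\<in>S. coords_near w) (\<lambda>f. \<forall>w\<in>S. good_at w f)"
      by (rule depends_on_Ball[OF depends_on_good_at])
  qed (rule finite_\<Omega>)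
  also have "\<dots> \<le> real (card \<Omega>) * (failure_bound \<Delta> * real (card {f\<in>\<Omega>. \<forall>w\<in>S. good_at w f}))"
    using mult_right_mono[OF card_not_good_at[OF v], of "real (card {f\<in>\<Omega>. \<forall>w\<in>S. good_at w f})"]
    by (simp add: ac_simps)
  finally show ?thesis using card_\<Omega>_pos by simp
qed

lemma exists_good_labelling: "\<exists>f\<in>\<Omega>. \<forall>v\<in>V. good_at v f"
proof -
  interpret counting_lll \<Omega> V "\<lambda>v f. \<not> good_at v f" dependent_vertices "D + D * D" "failure_bound \<Delta>"
  proof
    show "\<Omega> \<noteq> {}" using card_\<Omega>_pos by auto
    show "1 \<le> D + D * D" using \<Delta>_ge_3 by (cases D) auto
    show "card (dependent_vertices v \<inter> V) \<le> D + D * D" if "v \<in> V" for v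
      using card_dependent_vertices[OF that] by (simp add: dependent_vertices_def Int_absorb2)
    show "4 * real (D + D * D) * failure_bound \<Delta> \<le> 1"
      using large by (simp add: large_enough_def power2_eq_square)
  qed (use finite_\<Omega> finite_V failure_bound_nonneg card_not_good_at_avoiding in auto)
  from all_avoidable show ?thesis by simp
qed

theorem colourings_exist:
  "\<exists>c1 c2 c3v c3e.
     (\<forall>v\<in>V. c1 v \<in> {1..p}) \<and> (\<forall>u\<in>V. \<forall>v\<in>V. E u v \<longrightarrow> c2 {u, v} \<in> {1..q}) \<and>
     (\<forall>v\<in>V. c3v v \<in> {1..2 * p + q}) \<and> (\<forall>u\<in>V. \<forall>v\<in>V. E u v \<longrightarrow> c3e {u, v} \<in> {1..2 * p + q}) \<and>
     (\<forall>v\<in>V. c1_balanced_at V E D c1 v \<and> c2_balanced_at V E D c2 v \<and>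
        c3_sum_rule_at V E D (\<Delta> powr (-1/6)) c1 c2 c3e v \<and> c3_sparse_at V E D c3e v \<and>
        c3_consistent_at V E c3v c3e v \<and> S_spread_at V E D R c1 v)"
proof -
  obtain f where f: "f \<in> \<Omega>" and good: "\<forall>v\<in>V. good_at v f"
    using exists_good_labelling by blast
  have edge: "{u, v} \<in> edge_set" if "E u v" for u v
    using that by (auto simp: edge_set_def)
  have "c1_of f v \<in> {1..p}" "c3v_of f v \<in> {1..2 * p + q}" if "v \<in> V" for v
    using labelling_vertex[OF f that] by (auto simp: c1_of_def c3v_of_def vertex_labels_def)
  moreover have "c2_of f {u, v} \<in> {1..q}" if "E u v" for u v
    using labelling_edge[OF f edge[OF that]] by (auto simp: c2_of_def edge_labels_def)
  moreover have "c3e_of f {u, v} \<in> {1..2 * p + q}" if "u \<in> V" "v \<in> V" "E u v" for u v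
    using that simple
      edge_colour_in_range[OF labelling_vertex[OF f that(2)] labelling_vertex[OF f that(1)]
        labelling_edge[OF f edge[OF that(3)]]]
    by (auto simp: c3e_of_doubleton simple_graph_def)
  ultimately show ?thesis
    using good c3_consistent_at_c3e_of[OF simple, of f] unfolding good_at_def
    by (intro exI[of _ "c1_of f"] exI[of _ "c2_of f"] exI[of _ "c3v_of f"] exI[of _ "c3e_of f"])
      blast
qed

end

theorem mainTheorem2:
  "\<exists>\<epsilon> :: nat \<Rightarrow> real. (\<epsilon> \<longlongrightarrow> 0) at_top \<and>
   (\<exists>D0 :: nat. \<forall>(V :: 'a set) E D (R :: nat \<Rightarrow> nat \<Rightarrow> real).
     simple_graph V E \<and> max_degree V E D \<and> D \<ge> D0 \<and>
     (\<forall>v\<in>V. \<forall>k\<in>{1..par_p D}.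
        real (par_B D * deg V E v * k) + R (deg V E v) D \<le> real D ^ 2)
     \<longrightarrow>
     (\<exists>(c1 :: 'a \<Rightarrow> nat) (c2 :: 'a set \<Rightarrow> nat) (c3v :: 'a \<Rightarrow> nat) (c3e :: 'a set \<Rightarrow> nat).
        (\<forall>v\<in>V. c1 v \<in> {1..par_p D}) \<and>
        (\<forall>u\<in>V. \<forall>v\<in>V. E u v \<longrightarrow> c2 {u, v} \<in> {1..par_q D}) \<and>
        (\<forall>v\<in>V. c3v v \<in> {1..2 * par_p D + par_q D}) \<and>
        (\<forall>u\<in>V. \<forall>v\<in>V. E u v \<longrightarrow> c3e {u, v} \<in> {1..2 * par_p D + par_q D}) \<and>
        (\<forall>v\<in>V.
          (real (deg V E v) \<ge> real D / 3 \<longrightarrow>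
             (\<forall>k\<in>{1..par_p D}.
                \<bar>real (card {u \<in> nbrs V E v. c1 u = k}) - real (deg V E v) / real (par_p D)\<bar>
                  \<le> sqrt (real D))) \<and>
          (real (deg V E v) \<ge> real D / 3 \<longrightarrow>
             (\<forall>k\<in>{1..par_q D}.
                \<bar>real (card {u \<in> nbrs V E v. c2 {u, v} = k}) - real (deg V E v) / real (par_q D)\<bar>
                  \<le> 3 * real D powr (1/3) * ln (real D) powr (2/3))) \<and>
          real (card {u \<in> nbrs V E v. c3e {u, v} = c1 u + c1 v + c2 {u, v}})
             \<ge> real (deg V E v) - (3 + \<epsilon> D) * real D powr (2/3) * ln (real D) powr (1/3) \<and>
          (\<forall>k\<in>{1..2 * par_p D + par_q D}.
             real (card {u \<in> nbrs V E v. c3e {u, v} = k})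
               \<le> real D powr (2/3) * ln (real D) powr (1/3)
                 + 5 * real D powr (1/3) * ln (real D) powr (2/3)) \<and>
          (\<forall>u\<in>nbrs V E v. c3v u = c3v v \<longrightarrow> c3e {u, v} = c3v v) \<and>
          (real (deg V E v) \<ge> real D / 3 \<longrightarrow>
             (\<forall>\<alpha>::nat. \<alpha> > 0 \<longrightarrow>
                real (card {u \<in> nbrs V E v. real (deg V E u) \<ge> real D / 3 \<and>
                   real (par_B D * deg V E u * c1 u) + R (deg V E u) D \<in> I_int D \<alpha>})
                \<le> real D powr (5/6) * ln (real D) powr (1/6) + sqrt (real D))))))"
proof -
  obtain D0 where D0: "\<And>n. D0 \<le> n \<Longrightarrow> large_enough (real n)"
    using eventually_compose_filterlim[OF eventually_large_enough filterlim_real_sequentially]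
    by (auto simp: eventually_sequentially)
  show ?thesis
  proof (intro exI[of _ "\<lambda>n. real n powr (-1/6)"] exI[of _ D0] conjI allI impI)
    show "((\<lambda>n::nat. real n powr (-1/6)) \<longlongrightarrow> 0) at_top" by real_asymp
  qed (rule colouring_setting.colourings_exist[unfolded c1_balanced_at_def c2_balanced_at_def
      c3_sum_rule_at_def c3_sparse_at_def c3_consistent_at_def S_spread_at_def],
    unfold_locales, use D0 in auto)
qed

end
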